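(* Let $S$ be an $L$-theory extending $I\Sigma_1$ such that for some $K\in\mathbb{N}$, $S$ proves: for all pairwise coprime $a,b,c$ with $a+b=c$ one has $c<K\,\mathrm{rad}(abc)^{1+1/3}$; and $S$ proves that the only $x,y,a,b>1$ with $x^a-y^b=1$ are $x=3,a=2,y=2,b=3$. Let $\langle \mathcal{B}, e\rangle$ be any model of $S + \mathrm{Exp}'$, with $\mathcal{A}$ a substructure of $\mathcal{B}$ satisfying $\mathrm{Pr}$ such that $e: B\times A\to B$. Then Catalan's conjecture for $e$ holds in $\langle \mathcal{B}, e\rangle$: if $x,y\in B$, $a,b\in A$, $x,y,a,b>1$ and $e(x,a)-e(y,b)=1$, then $x=3$, $a=2$, $y=2$, $b=3$.
   Context: $L = \langle 0,1,+,\cdot,\le\rangle$; $x^y$ denotes the exponential $\Delta_1$-definable in $I\Sigma_1$; $\mathrm{rad}(a)$ is the product of the distinct primes dividing $a$. Presburger arithmetic $\mathrm{Pr}$: $0 \ne z+1$; $x\neq 0 \to \exists z\,(x = z+1)$; $x+z=y+z\to x=y$; $x+0=x$; associativity and commutativity of $+$; $x\le y \leftrightarrow \exists z\,(x+z=y)$; for each standard $0<n$, $\exists y\,(ny \le x < n(y+1))$. $\mathrm{Exp}'$ consists of: (e0) there is an $L$-substructure $\mathcal{A}$ of $\mathcal{B}$ satisfying $\mathrm{Pr}$ with $e: B\times A\to B$; and for all $x\in B$, $y,z\in A$: (e1) $(x=1\vee y=0)\leftrightarrow e(x,y)=1$; (e2) $x\neq0\to e(x,y)\neq 0$; (e3)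 $e(x,1)=x$; (e4) $e(x,y+z)=e(x,y)e(x,z)$. *)

theory Defs
  imports Main
begin

section \<open>L-structures (L = 0,1,+,*,<=) on a carrier set\<close>

record 'b lstr =
  car :: "'b set"
  zer :: 'b
  one :: 'b
  pl  :: "'b \<Rightarrow> 'b \<Rightarrow> 'b"
  tm  :: "'b \<Rightarrow> 'b \<Rightarrow> 'b"
  lq  :: "'b \<Rightarrow> 'b \<Rightarrow> bool"

definition lstructure :: "'b lstr \<Rightarrow> bool" where
  "lstructure M \<longleftrightarrow> zer M \<in> car M \<and> one M \<in> car M \<and>
     (\<forall>x\<in>car M. \<forall>y\<in>car M. pl M x y \<in> car M \<and> tm M x y \<in> car M)"

definition lt :: "'b lstr \<Rightarrow> 'b \<Rightarrow> 'b \<Rightarrow> bool" where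
  "lt M x y \<longleftrightarrow> lq M x y \<and> x \<noteq> y"

fun num :: "'b lstr \<Rightarrow> nat \<Rightarrow> 'b" where
  "num M 0 = zer M"
| "num M (Suc 0) = one M"
| "num M (Suc (Suc n)) = pl M (num M (Suc n)) (one M)"

fun nsm :: "'b lstr \<Rightarrow> nat \<Rightarrow> 'b \<Rightarrow> 'b" where
  "nsm M 0 y = zer M"
| "nsm M (Suc 0) y = y"
| "nsm M (Suc (Suc n)) y = pl M (nsm M (Suc n) y) y"

datatype trm = V nat | Zt | Ot | Pt trm trm | Tt trm trm

datatype fm = Eqf trm trm | Lef trm trm | Negf fm | Conjf fm fm | Disjf fm fm
  | Impf fm fm | Exf nat fm | Allf nat fm

fun tvars :: "trm \<Rightarrow> nat set" where
  "tvars (V n) = {n}" | "tvars Zt = {}" | "tvars Ot = {}"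
| "tvars (Pt s t) = tvars s \<union> tvars t" | "tvars (Tt s t) = tvars s \<union> tvars t"

fun fvars :: "fm \<Rightarrow> nat set" where
  "fvars (Eqf s t) = tvars s \<union> tvars t"
| "fvars (Lef s t) = tvars s \<union> tvars t"
| "fvars (Negf p) = fvars p"
| "fvars (Conjf p q) = fvars p \<union> fvars q"
| "fvars (Disjf p q) = fvars p \<union> fvars q"
| "fvars (Impf p q) = fvars p \<union> fvars q"
| "fvars (Exf x p) = fvars p - {x}"
| "fvars (Allf x p) = fvars p - {x}"

definition sentence :: "fm \<Rightarrow> bool" where
  "sentence p \<longleftrightarrow> fvars p = {}"

fun ev :: "'b lstr \<Rightarrow> (nat \<Rightarrow> 'b) \<Rightarrow> trm \<Rightarrow> 'b" where
  "ev M r (V n) = r n" | "ev M r Zt = zer M" | "ev M r Ot = one M"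
| "ev M r (Pt s t) = pl M (ev M r s) (ev M r t)"
| "ev M r (Tt s t) = tm M (ev M r s) (ev M r t)"

fun sat :: "'b lstr \<Rightarrow> (nat \<Rightarrow> 'b) \<Rightarrow> fm \<Rightarrow> bool" where
  "sat M r (Eqf s t) = (ev M r s = ev M r t)"
| "sat M r (Lef s t) = lq M (ev M r s) (ev M r t)"
| "sat M r (Negf p) = (\<not> sat M r p)"
| "sat M r (Conjf p q) = (sat M r p \<and> sat M r q)"
| "sat M r (Disjf p q) = (sat M r p \<or> sat M r q)"
| "sat M r (Impf p q) = (sat M r p \<longrightarrow> sat M r q)"
| "sat M r (Exf x p) = (\<exists>a\<in>car M. sat M (r(x := a)) p)"
| "sat M r (Allf x p) = (\<forall>a\<in>car M. sat M (r(x := a)) p)"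

inductive delta0 :: "fm \<Rightarrow> bool" where
  "delta0 (Eqf s t)"
| "delta0 (Lef s t)"
| "delta0 p \<Longrightarrow> delta0 (Negf p)"
| "delta0 p \<Longrightarrow> delta0 q \<Longrightarrow> delta0 (Conjf p q)"
| "delta0 p \<Longrightarrow> delta0 q \<Longrightarrow> delta0 (Disjf p q)"
| "delta0 p \<Longrightarrow> delta0 q \<Longrightarrow> delta0 (Impf p q)"
| "x \<notin> tvars t \<Longrightarrow> delta0 p \<Longrightarrow> delta0 (Exf x (Conjf (Lef (V x) t) p))"
| "x \<notin> tvars t \<Longrightarrow> delta0 p \<Longrightarrow> delta0 (Allf x (Impf (Lef (V x) t) p))"

inductive sigma1 :: "fm \<Rightarrow> bool" where
  "delta0 p \<Longrightarrow> sigma1 p"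
| "sigma1 p \<Longrightarrow> sigma1 (Exf x p)"

definition pa_minus :: "'b lstr \<Rightarrow> bool" where
  "pa_minus M \<longleftrightarrow> (let C = car M; p = pl M; t = tm M; z = zer M; u = one M in
     (\<forall>x\<in>C. \<forall>y\<in>C. \<forall>w\<in>C. p x (p y w) = p (p x y) w) \<and>
     (\<forall>x\<in>C. \<forall>y\<in>C. p x y = p y x) \<and>
     (\<forall>x\<in>C. \<forall>y\<in>C. \<forall>w\<in>C. t x (t y w) = t (t x y) w) \<and>
     (\<forall>x\<in>C. \<forall>y\<in>C. t x y = t y x) \<and>
     (\<forall>x\<in>C. \<forall>y\<in>C. \<forall>w\<in>C. t x (p y w) = p (t x y) (t x w)) \<and>
     (\<forall>x\<in>C. p x z = x \<and> t x z = z) \<and>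
     (\<forall>x\<in>C. t x u = x) \<and>
     (\<forall>x\<in>C. lq M x x) \<and>
     (\<forall>x\<in>C. \<forall>y\<in>C. \<forall>w\<in>C. lt M x y \<and> lt M y w \<longrightarrow> lt M x w) \<and>
     (\<forall>x\<in>C. \<forall>y\<in>C. lt M x y \<or> x = y \<or> lt M y x) \<and>
     (\<forall>x\<in>C. \<forall>y\<in>C. \<forall>w\<in>C. lt M x y \<longrightarrow> lt M (p x w) (p y w)) \<and>
     (\<forall>x\<in>C. \<forall>y\<in>C. \<forall>w\<in>C. lt M z w \<and> lt M x y \<longrightarrow> lt M (t x w) (t y w)) \<and>
     (\<forall>x\<in>C. \<forall>y\<in>C. lt M x y \<longrightarrow> (\<exists>w\<in>C. p x w = y)) \<and>
     lt M z u \<and>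
     (\<forall>x\<in>C. lt M z x \<longrightarrow> lq M u x) \<and>
     (\<forall>x\<in>C. lq M z x))"

definition induction_inst :: "'b lstr \<Rightarrow> fm \<Rightarrow> nat \<Rightarrow> bool" where
  "induction_inst M p x \<longleftrightarrow>
     (\<forall>r. range r \<subseteq> car M \<longrightarrow>
        sat M (r(x := zer M)) p \<and>
        (\<forall>a\<in>car M. sat M (r(x := a)) p \<longrightarrow> sat M (r(x := pl M a (one M))) p)
        \<longrightarrow> (\<forall>a\<in>car M. sat M (r(x := a)) p))"

definition model_ISigma1 :: "'b lstr \<Rightarrow> bool" where
  "model_ISigma1 M \<longleftrightarrow> lstructure M \<and> pa_minus M \<and>
     (\<forall>p x. sigma1 p \<longrightarrow> induction_inst M p x)"

definition models :: "fm set \<Rightarrow> 'b lstr \<Rightarrow> bool" where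
  "models S M \<longleftrightarrow> lstructure M \<and>
     (\<forall>p\<in>S. \<forall>r. range r \<subseteq> car M \<longrightarrow> sat M r p)"

section \<open>Arithmetic notions inside a structure (unfolded meaning of the defining formulas)\<close>

definition dvd_in :: "'b lstr \<Rightarrow> 'b \<Rightarrow> 'b \<Rightarrow> bool" where
  "dvd_in M d n \<longleftrightarrow> (\<exists>q\<in>car M. n = tm M d q)"

definition coprime_in :: "'b lstr \<Rightarrow> 'b \<Rightarrow> 'b \<Rightarrow> bool" where
  "coprime_in M a b \<longleftrightarrow> (\<forall>d\<in>car M. dvd_in M d a \<and> dvd_in M d b \<longrightarrow> d = one M)"

definition prime_in :: "'b lstr \<Rightarrow> 'b \<Rightarrow> bool" where
  "prime_in M p \<longleftrightarrow> lt M (one M) p \<and>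
     (\<forall>d\<in>car M. dvd_in M d p \<longrightarrow> d = one M \<or> d = p)"

text \<open>Goedel's beta function, relationally: beta(a,b,i) = a mod (1 + (i+1) b).\<close>
definition beta_in :: "'b lstr \<Rightarrow> 'b \<Rightarrow> 'b \<Rightarrow> 'b \<Rightarrow> 'b \<Rightarrow> bool" where
  "beta_in M a b i v \<longleftrightarrow>
     (let m = pl M (one M) (tm M (pl M i (one M)) b) in
       lt M v m \<and> (\<exists>q\<in>car M. a = pl M (tm M q m) v))"

text \<open>The Delta_1-definable exponential: z = x^y.\<close>
definition pow_in :: "'b lstr \<Rightarrow> 'b \<Rightarrow> 'b \<Rightarrow> 'b \<Rightarrow> bool" where
  "pow_in M x y z \<longleftrightarrow> (\<exists>a\<in>car M. \<exists>b\<in>car M.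
     beta_in M a b (zer M) (one M) \<and>
     (\<forall>i\<in>car M. lt M i y \<longrightarrow>
        (\<forall>u\<in>car M. beta_in M a b i u \<longrightarrow> beta_in M a b (pl M i (one M)) (tm M u x))) \<and>
     beta_in M a b y z)"

text \<open>r = rad(n): product of the distinct primes p <= n dividing n (coded iterated product).\<close>
definition rad_in :: "'b lstr \<Rightarrow> 'b \<Rightarrow> 'b \<Rightarrow> bool" where
  "rad_in M n r \<longleftrightarrow> (\<exists>a\<in>car M. \<exists>b\<in>car M.
     beta_in M a b (zer M) (one M) \<and>
     (\<forall>i\<in>car M. lt M i n \<longrightarrow>
        (\<forall>u\<in>car M. beta_in M a b i u \<longrightarrow>
           beta_in M a b (pl M i (one M))
             (if prime_in M (pl M i (one M)) \<and> dvd_in M (pl M i (one M)) n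
              then tm M u (pl M i (one M)) else u))) \<and>
     beta_in M a b n r)"

text \<open>abc sentence with constant K: c < K rad(abc)^(4/3), read as c^3 < K^3 rad(abc)^4.\<close>
definition abc_in :: "'b lstr \<Rightarrow> nat \<Rightarrow> bool" where
  "abc_in M K \<longleftrightarrow> (let k = num M K; t = tm M in
     \<forall>a\<in>car M. \<forall>b\<in>car M. \<forall>c\<in>car M. \<forall>r\<in>car M.
       lt M (zer M) a \<and> lt M (zer M) b \<and>
       coprime_in M a b \<and> coprime_in M b c \<and> coprime_in M a c \<and>
       pl M a b = c \<and> rad_in M (t (t a b) c) r \<longrightarrow>
       lt M (t (t c c) c) (t (t (t k k) k) (t (t r r) (t r r))))"

definition catalan_in :: "'b lstr \<Rightarrow> bool" where
  "catalan_in M \<longleftrightarrow>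
     (\<forall>x\<in>car M. \<forall>y\<in>car M. \<forall>a\<in>car M. \<forall>b\<in>car M. \<forall>u\<in>car M. \<forall>v\<in>car M.
        lt M (one M) x \<and> lt M (one M) y \<and> lt M (one M) a \<and> lt M (one M) b \<and>
        pow_in M x a u \<and> pow_in M y b v \<and> u = pl M v (one M) \<longrightarrow>
        x = num M 3 \<and> a = num M 2 \<and> y = num M 2 \<and> b = num M 3)"

definition presburger_sub :: "'b lstr \<Rightarrow> 'b set \<Rightarrow> bool" where
  "presburger_sub B A \<longleftrightarrow> A \<subseteq> car B \<and> zer B \<in> A \<and> one B \<in> A \<and>
     (\<forall>x\<in>A. \<forall>y\<in>A. pl B x y \<in> A \<and> tm B x y \<in> A) \<and>
     (\<forall>z\<in>A. zer B \<noteq> pl B z (one B)) \<and>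
     (\<forall>x\<in>A. x \<noteq> zer B \<longrightarrow> (\<exists>z\<in>A. x = pl B z (one B))) \<and>
     (\<forall>x\<in>A. \<forall>y\<in>A. \<forall>z\<in>A. pl B x z = pl B y z \<longrightarrow> x = y) \<and>
     (\<forall>x\<in>A. pl B x (zer B) = x) \<and>
     (\<forall>x\<in>A. \<forall>y\<in>A. \<forall>z\<in>A. pl B x (pl B y z) = pl B (pl B x y) z) \<and>
     (\<forall>x\<in>A. \<forall>y\<in>A. pl B x y = pl B y x) \<and>
     (\<forall>x\<in>A. \<forall>y\<in>A. lq B x y \<longleftrightarrow> (\<exists>z\<in>A. pl B x z = y)) \<and>
     (\<forall>n::nat. 0 < n \<longrightarrow> (\<forall>x\<in>A. \<exists>y\<in>A.
        lq B (nsm B n y) x \<and> lt B x (nsm B n (pl B y (one B)))))"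

definition exp_prime :: "'b lstr \<Rightarrow> 'b set \<Rightarrow> ('b \<Rightarrow> 'b \<Rightarrow> 'b) \<Rightarrow> bool" where
  "exp_prime B A e \<longleftrightarrow> presburger_sub B A \<and>
     (\<forall>x\<in>car B. \<forall>y\<in>A. e x y \<in> car B) \<and>
     (\<forall>x\<in>car B. \<forall>y\<in>A. (x = one B \<or> y = zer B) \<longleftrightarrow> e x y = one B) \<and>
     (\<forall>x\<in>car B. \<forall>y\<in>A. x \<noteq> zer B \<longrightarrow> e x y \<noteq> zer B) \<and>
     (\<forall>x\<in>car B. e x (one B) = x) \<and>
     (\<forall>x\<in>car B. \<forall>y\<in>A. \<forall>z\<in>A. e x (pl B y z) = tm B (e x y) (e x z))"

end

theory Submission
  imports Defs
begin

text \<open>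
  Write the exponents as \<open>a = 12 q + i\<close> and \<open>b = 12 q' + j\<close> with standard \<open>i, j < 12\<close>, using
  division by 12 in the Presburger structure \<open>A\<close>, and put \<open>u = e(x, a) = e(x, q)\<^sup>1\<^sup>2 x\<^sup>i\<close>,
  \<open>v = e(y, b)\<close>, so that \<open>u = v + 1\<close>. The radical of \<open>u v\<close> divides \<open>D = e(x, q) x e(y, q') y\<close>,
  and \<open>D\<^sup>1\<^sup>2 \<le> u\<^sup>8\<close> unless \<open>q = q' = 0\<close>; the abc inequality \<open>u\<^sup>3 < K\<^sup>3 rad(uv)\<^sup>4\<close> then gives
  \<open>u\<^sup>9 < K\<^sup>9 u\<^sup>8\<close>, i.e. \<open>u < K\<^sup>9\<close>. As \<open>2\<^sup>a \<le> u\<close>, both exponents are standard numerals. For standard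
  exponents \<open>e\<close> agrees with the \<open>\<Delta>\<^sub>1\<close>-definable exponential, for which Catalan's equation has only
  the solution \<open>3\<^sup>2 - 2\<^sup>3 = 1\<close> by hypothesis.

  Using the two hypotheses requires witnesses for the \<open>\<beta>\<close>-function codes in their definitions:
  codes of standard-length sequences of powers, and codes of the sequence of partial radicals
  of a possibly nonstandard number. Both are built by Chinese remaindering, and the latter by
  \<open>\<Sigma>\<^sub>1\<close>-induction on a bounded formula expressing that such a code exists.
\<close>

definition dvd_fm :: "nat \<Rightarrow> trm \<Rightarrow> trm \<Rightarrow> fm" where
  "dvd_fm q s t = Exf q (Conjf (Lef (V q) t) (Eqf t (Tt s (V q))))"

definition prime_fm :: "nat \<Rightarrow> nat \<Rightarrow> trm \<Rightarrow> fm" where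
  "prime_fm d q t = Conjf (Conjf (Lef Ot t) (Negf (Eqf Ot t)))
     (Allf d (Impf (Lef (V d) t) (Impf (dvd_fm q (V d) t) (Disjf (Eqf (V d) Ot) (Eqf (V d) t)))))"

definition coprime_fm :: "nat \<Rightarrow> nat \<Rightarrow> trm \<Rightarrow> trm \<Rightarrow> fm" where
  "coprime_fm d q s t = Allf d (Impf (Lef (V d) s) (Impf (Conjf (dvd_fm q (V d) s) (dvd_fm q (V d) t)) (Eqf (V d) Ot)))"

definition beta_fm :: "nat \<Rightarrow> trm \<Rightarrow> trm \<Rightarrow> trm \<Rightarrow> trm \<Rightarrow> fm" where
  "beta_fm q a b j w = Conjf (Conjf (Lef w (Pt Ot (Tt (Pt j Ot) b))) (Negf (Eqf w (Pt Ot (Tt (Pt j Ot) b)))))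
     (Exf q (Conjf (Lef (V q) a) (Eqf a (Pt (Tt (V q) (Pt Ot (Tt (Pt j Ot) b))) w))))"

lemma ev_upd[simp]: "q \<notin> tvars s \<Longrightarrow> ev M (r(q := c)) s = ev M r s"
  by (induct s) auto
lemma delta0_dvd_fm[intro]: "q \<notin> tvars t \<Longrightarrow> delta0 (dvd_fm q s t)"
  unfolding dvd_fm_def by (auto intro!: delta0.intros)
lemma delta0_prime_fm[intro]: "d \<notin> tvars t \<Longrightarrow> q \<notin> tvars t \<Longrightarrow> delta0 (prime_fm d q t)"
  unfolding prime_fm_def by (auto intro!: delta0.intros)
lemma delta0_coprime_fm[intro]: "d \<notin> tvars s \<Longrightarrow> q \<notin> tvars s \<Longrightarrow> q \<notin> tvars t \<Longrightarrow> delta0 (coprime_fm d q s t)"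
  unfolding coprime_fm_def by (auto intro!: delta0.intros)
lemma delta0_beta_fm[intro]: "q \<notin> tvars a \<Longrightarrow> delta0 (beta_fm q a b j w)"
  unfolding beta_fm_def by (auto intro!: delta0.intros)

fun npow :: "'b lstr \<Rightarrow> 'b \<Rightarrow> nat \<Rightarrow> 'b" where
  "npow M x 0 = one M"
| "npow M x (Suc k) = tm M (npow M x k) x"

section \<open>Arithmetic in models of \<open>I\<Sigma>\<^sub>1\<close>\<close>

locale isigma1_model =
  fixes M :: "'b lstr"
  assumes model: "model_ISigma1 M"
begin

abbreviation C where "C \<equiv> car M"
abbreviation pls (infixl "\<oplus>" 65) where "x \<oplus> y \<equiv> pl M x y"
abbreviation tms (infixl "\<otimes>" 70) where "x \<otimes> y \<equiv> tm M x y"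
abbreviation Z where "Z \<equiv> zer M"
abbreviation U where "U \<equiv> one M"
abbreviation le (infix "\<preceq>" 50) where "x \<preceq> y \<equiv> lq M x y"
abbreviation less (infix "\<prec>" 50) where "x \<prec> y \<equiv> lt M x y"

lemma model_lstructure: "lstructure M"
  using model unfolding model_ISigma1_def by simp
lemma model_pa_minus: "pa_minus M"
  using model unfolding model_ISigma1_def by simp
lemma model_induction: "sigma1 p \<Longrightarrow> induction_inst M p x"
  using model unfolding model_ISigma1_def by simp

lemma pa_minus_axioms:
    "\<forall>x\<in>C. \<forall>y\<in>C. \<forall>w\<in>C. x \<oplus> (y \<oplus> w) = x \<oplus> y \<oplus> w"
    "\<forall>x\<in>C. \<forall>y\<in>C. x \<oplus> y = y \<oplus> x"
    "\<forall>x\<in>C. \<forall>y\<in>C. \<forall>w\<in>C. x \<otimes> (y \<otimes> w) = x \<otimes> y \<otimes> w"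
    "\<forall>x\<in>C. \<forall>y\<in>C. x \<otimes> y = y \<otimes> x"
    "\<forall>x\<in>C. \<forall>y\<in>C. \<forall>w\<in>C. x \<otimes> (y \<oplus> w) = x \<otimes> y \<oplus> x \<otimes> w"
    "\<forall>x\<in>C. x \<oplus> Z = x \<and> x \<otimes> Z = Z"
    "\<forall>x\<in>C. x \<otimes> U = x"
    "\<forall>x\<in>C. x \<preceq> x"
    "\<forall>x\<in>C. \<forall>y\<in>C. \<forall>w\<in>C. x \<prec> y \<and> y \<prec> w \<longrightarrow> x \<prec> w"
    "\<forall>x\<in>C. \<forall>y\<in>C. x \<prec> y \<or> x = y \<or> y \<prec> x"
    "\<forall>x\<in>C. \<forall>y\<in>C. \<forall>w\<in>C. x \<prec> y \<longrightarrow> x \<oplus> w \<prec> y \<oplus> w"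
    "\<forall>x\<in>C. \<forall>y\<in>C. \<forall>w\<in>C. Z \<prec> w \<and> x \<prec> y \<longrightarrow> x \<otimes> w \<prec> y \<otimes> w"
    "\<forall>x\<in>C. \<forall>y\<in>C. x \<prec> y \<longrightarrow> (\<exists>w\<in>C. x \<oplus> w = y)"
    "Z \<prec> U"
    "\<forall>x\<in>C. Z \<prec> x \<longrightarrow> U \<preceq> x"
    "\<forall>x\<in>C. Z \<preceq> x"
  using model_pa_minus unfolding pa_minus_def Let_def by - (elim conjE, assumption)+

lemma add_assoc: "x \<in> C \<Longrightarrow> y \<in> C \<Longrightarrow> w \<in> C \<Longrightarrow> x \<oplus> y \<oplus> w = x \<oplus> (y \<oplus> w)"
  using pa_minus_axioms(1) by simp
lemma add_comm: "x \<in> C \<Longrightarrow> y \<in> C \<Longrightarrow> x \<oplus> y = y \<oplus> x"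
  using pa_minus_axioms(2) by blast
lemma mul_assoc: "x \<in> C \<Longrightarrow> y \<in> C \<Longrightarrow> w \<in> C \<Longrightarrow> x \<otimes> y \<otimes> w = x \<otimes> (y \<otimes> w)"
  using pa_minus_axioms(3) by simp
lemma mul_comm: "x \<in> C \<Longrightarrow> y \<in> C \<Longrightarrow> x \<otimes> y = y \<otimes> x"
  using pa_minus_axioms(4) by blast
lemma distrib_left: "x \<in> C \<Longrightarrow> y \<in> C \<Longrightarrow> w \<in> C \<Longrightarrow> x \<otimes> (y \<oplus> w) = x \<otimes> y \<oplus> x \<otimes> w"
  using pa_minus_axioms(5) by blast
lemma add_0[simp]: "x \<in> C \<Longrightarrow> x \<oplus> Z = x" and mul_0[simp]: "x \<in> C \<Longrightarrow> x \<otimes> Z = Z"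
  using pa_minus_axioms(6) by blast+
lemma mul_1[simp]: "x \<in> C \<Longrightarrow> x \<otimes> U = x"
  using pa_minus_axioms(7) by blast
lemma le_refl[simp]: "x \<in> C \<Longrightarrow> x \<preceq> x"
  using pa_minus_axioms(8) by blast
lemma lt_trans: "x \<in> C \<Longrightarrow> y \<in> C \<Longrightarrow> w \<in> C \<Longrightarrow> x \<prec> y \<Longrightarrow> y \<prec> w \<Longrightarrow> x \<prec> w"
  using pa_minus_axioms(9) by blast
lemma trichotomy: "x \<in> C \<Longrightarrow> y \<in> C \<Longrightarrow> x \<prec> y \<or> x = y \<or> y \<prec> x"
  using pa_minus_axioms(10) by blast
lemma add_lt_mono: "x \<in> C \<Longrightarrow> y \<in> C \<Longrightarrow> w \<in> C \<Longrightarrow> x \<prec> y \<Longrightarrow> x \<oplus> w \<prec> y \<oplus> w"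
  using pa_minus_axioms(11) by blast
lemma mul_lt_mono: "x \<in> C \<Longrightarrow> y \<in> C \<Longrightarrow> w \<in> C \<Longrightarrow> Z \<prec> w \<Longrightarrow> x \<prec> y \<Longrightarrow> x \<otimes> w \<prec> y \<otimes> w"
  using pa_minus_axioms(12) by blast
lemma lt_ex: "x \<in> C \<Longrightarrow> y \<in> C \<Longrightarrow> x \<prec> y \<Longrightarrow> \<exists>w\<in>C. x \<oplus> w = y"
  using pa_minus_axioms(13) by blast
lemma Z_lt_U[simp]: "Z \<prec> U"
  using pa_minus_axioms(14) .
lemma pos_ge1: "x \<in> C \<Longrightarrow> Z \<prec> x \<Longrightarrow> U \<preceq> x"
  using pa_minus_axioms(15) by blast
lemma Z_le[simp]: "x \<in> C \<Longrightarrow> Z \<preceq> x"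
  using pa_minus_axioms(16) by blast
lemma zer_carrier[simp]: "Z \<in> C" and one_carrier[simp]: "U \<in> C"
  using model_lstructure unfolding lstructure_def by auto

lemma pl_carrier[simp]: "x \<in> C \<Longrightarrow> y \<in> C \<Longrightarrow> x \<oplus> y \<in> C"
  and tm_carrier[simp]: "x \<in> C \<Longrightarrow> y \<in> C \<Longrightarrow> x \<otimes> y \<in> C"
  using model_lstructure unfolding lstructure_def by auto

lemma Z_ne_U[simp]: "Z \<noteq> U" "U \<noteq> Z" using Z_lt_U by (auto simp: lt_def)
lemma lt_irrefl[simp]: "\<not> x \<prec> x" by (simp add: lt_def)
lemma le_iff: "x \<in> C \<Longrightarrow> x \<preceq> y \<longleftrightarrow> x \<prec> y \<or> x = y" by (auto simp: lt_def)
lemma lt_imp_le: "x \<prec> y \<Longrightarrow> x \<preceq> y" by (simp add: lt_def)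
lemma lt_asym: "x \<in> C \<Longrightarrow> y \<in> C \<Longrightarrow> x \<prec> y \<Longrightarrow> \<not> y \<prec> x"
  using lt_trans[of x y x] by auto
lemma not_lt: assumes "x \<in> C" "y \<in> C" shows "\<not> x \<prec> y \<longleftrightarrow> y \<preceq> x"
  using trichotomy[OF assms] lt_asym[OF assms] le_iff[OF assms(2), of x] by auto
lemma not_le: "x \<in> C \<Longrightarrow> y \<in> C \<Longrightarrow> \<not> x \<preceq> y \<longleftrightarrow> y \<prec> x"
  using not_lt[of y x] by blast
lemma le_trans: "x \<in> C \<Longrightarrow> y \<in> C \<Longrightarrow> w \<in> C \<Longrightarrow> x \<preceq> y \<Longrightarrow> y \<preceq> w \<Longrightarrow> x \<preceq> w"
  using le_iff[of x y] le_iff[of y w] le_iff[of x w] lt_trans[of x y w] by auto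
lemma le_lt_trans: "x \<in> C \<Longrightarrow> y \<in> C \<Longrightarrow> w \<in> C \<Longrightarrow> x \<preceq> y \<Longrightarrow> y \<prec> w \<Longrightarrow> x \<prec> w"
  using le_iff[of x y] lt_trans[of x y w] by auto
lemma lt_le_trans: "x \<in> C \<Longrightarrow> y \<in> C \<Longrightarrow> w \<in> C \<Longrightarrow> x \<prec> y \<Longrightarrow> y \<preceq> w \<Longrightarrow> x \<prec> w"
  using le_iff[of y w] lt_trans[of x y w] by auto
lemma le_antisym: "x \<in> C \<Longrightarrow> y \<in> C \<Longrightarrow> x \<preceq> y \<Longrightarrow> y \<preceq> x \<Longrightarrow> x = y"
  using not_lt[of x y] le_iff[of x y] by auto
lemma add_0_left[simp]: "x \<in> C \<Longrightarrow> Z \<oplus> x = x" using add_comm[of Z x] by simp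
lemma mul_0_left[simp]: "x \<in> C \<Longrightarrow> Z \<otimes> x = Z" using mul_comm[of Z x] by simp
lemma mul_1_left[simp]: "x \<in> C \<Longrightarrow> U \<otimes> x = x" using mul_comm[of U x] by simp
lemma add_left_comm: "x \<in> C \<Longrightarrow> y \<in> C \<Longrightarrow> w \<in> C \<Longrightarrow> x \<oplus> (y \<oplus> w) = y \<oplus> (x \<oplus> w)"
  using add_assoc[of x y w] add_assoc[of y x w] add_comm[of x y] by simp
lemma mul_left_comm: "x \<in> C \<Longrightarrow> y \<in> C \<Longrightarrow> w \<in> C \<Longrightarrow> x \<otimes> (y \<otimes> w) = y \<otimes> (x \<otimes> w)"
  using mul_assoc[of x y w] mul_assoc[of y x w] mul_comm[of x y] by simp
lemma distrib_right: "x \<in> C \<Longrightarrow> y \<in> C \<Longrightarrow> w \<in> C \<Longrightarrow> (y \<oplus> w) \<otimes> x = y \<otimes> x \<oplus> w \<otimes> x"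
  using distrib_left[of x y w] mul_comm[of "y \<oplus> w" x] mul_comm[of y x] mul_comm[of w x] by simp
lemmas arith_simps = add_assoc add_comm add_left_comm mul_assoc mul_comm mul_left_comm distrib_left distrib_right
lemma add_lt_mono_iff: assumes "x \<in> C" "y \<in> C" "w \<in> C" shows "x \<oplus> w \<prec> y \<oplus> w \<longleftrightarrow> x \<prec> y"
  using add_lt_mono[OF assms] add_lt_mono[of y x w] assms trichotomy[of x y] lt_asym[of "x \<oplus> w" "y \<oplus> w"] by auto
lemma add_lt_mono_iff2: "x \<in> C \<Longrightarrow> y \<in> C \<Longrightarrow> w \<in> C \<Longrightarrow> w \<oplus> x \<prec> w \<oplus> y \<longleftrightarrow> x \<prec> y"
  using add_lt_mono_iff[of x y w] add_comm[of w x] add_comm[of w y] by simp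
lemma add_cancel: "x \<in> C \<Longrightarrow> y \<in> C \<Longrightarrow> w \<in> C \<Longrightarrow> x \<oplus> w = y \<oplus> w \<longleftrightarrow> x = y"
  using add_lt_mono[of x y w] add_lt_mono[of y x w] trichotomy[of x y] by auto
lemma add_cancel2: "x \<in> C \<Longrightarrow> y \<in> C \<Longrightarrow> w \<in> C \<Longrightarrow> w \<oplus> x = w \<oplus> y \<longleftrightarrow> x = y"
  using add_cancel[of x y w] add_comm[of w x] add_comm[of w y] by simp
lemma add_le_mono_iff: "x \<in> C \<Longrightarrow> y \<in> C \<Longrightarrow> w \<in> C \<Longrightarrow> x \<oplus> w \<preceq> y \<oplus> w \<longleftrightarrow> x \<preceq> y"
  using add_lt_mono_iff[of x y w] add_cancel[of x y w] le_iff[of x y] le_iff[of "x \<oplus> w" "y \<oplus> w"] by auto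
lemma add_le_mono_iff2: "x \<in> C \<Longrightarrow> y \<in> C \<Longrightarrow> w \<in> C \<Longrightarrow> w \<oplus> x \<preceq> w \<oplus> y \<longleftrightarrow> x \<preceq> y"
  using add_le_mono_iff[of x y w] add_comm[of w x] add_comm[of w y] by simp
lemma le_add: "x \<in> C \<Longrightarrow> y \<in> C \<Longrightarrow> x \<preceq> x \<oplus> y"
  using add_le_mono_iff2[of Z y x] by simp
lemma le_add2: "x \<in> C \<Longrightarrow> y \<in> C \<Longrightarrow> x \<preceq> y \<oplus> x"
  using le_add[of x y] add_comm[of x y] by simp
lemma pos_iff: "x \<in> C \<Longrightarrow> Z \<prec> x \<longleftrightarrow> x \<noteq> Z"
  using Z_le[of x] by (auto simp: lt_def)
lemma lt_succ: "x \<in> C \<Longrightarrow> x \<prec> x \<oplus> U"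
  using add_lt_mono_iff2[of Z U x] by simp

lemma lt_succ_le: assumes "x \<in> C" "y \<in> C" shows "x \<prec> y \<longleftrightarrow> x \<oplus> U \<preceq> y"
proof
  assume "x \<prec> y"
  then obtain w where w: "w \<in> C" "x \<oplus> w = y" using lt_ex assms by blast
  then have "w \<noteq> Z" using \<open>x \<prec> y\<close> assms by auto
  then have "U \<preceq> w" using pos_ge1 pos_iff w by blast
  then show "x \<oplus> U \<preceq> y" using w assms add_le_mono_iff2[of U w x] by simp
next
  assume "x \<oplus> U \<preceq> y"
  then show "x \<prec> y" using lt_succ[of x] assms lt_le_trans[of x "x \<oplus> U" y] by simp
qed

lemma le_succ_iff: "x \<in> C \<Longrightarrow> y \<in> C \<Longrightarrow> x \<preceq> y \<longleftrightarrow> x \<prec> y \<oplus> U"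
  using lt_succ_le[of x "y \<oplus> U"] add_le_mono_iff[of x y U] by simp
lemma mul_lt_mono_iff: assumes "x \<in> C" "y \<in> C" "w \<in> C" "Z \<prec> w" shows "x \<otimes> w \<prec> y \<otimes> w \<longleftrightarrow> x \<prec> y"
  using mul_lt_mono[OF assms(1-4)] mul_lt_mono[of y x w] assms trichotomy[of x y] lt_asym[of "x \<otimes> w" "y \<otimes> w"] by auto
lemma mul_cancel: "x \<in> C \<Longrightarrow> y \<in> C \<Longrightarrow> w \<in> C \<Longrightarrow> Z \<prec> w \<Longrightarrow> x \<otimes> w = y \<otimes> w \<longleftrightarrow> x = y"
  using mul_lt_mono[of x y w] mul_lt_mono[of y x w] trichotomy[of x y] by auto
lemma mul_le_mono_iff: "x \<in> C \<Longrightarrow> y \<in> C \<Longrightarrow> w \<in> C \<Longrightarrow> Z \<prec> w \<Longrightarrow> x \<otimes> w \<preceq> y \<otimes> w \<longleftrightarrow> x \<preceq> y"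
  using mul_lt_mono_iff[of x y w] mul_cancel[of x y w] le_iff[of x y] le_iff[of "x \<otimes> w" "y \<otimes> w"] by auto
lemma mul_le_mono_r: "x \<in> C \<Longrightarrow> y \<in> C \<Longrightarrow> w \<in> C \<Longrightarrow> x \<preceq> y \<Longrightarrow> x \<otimes> w \<preceq> y \<otimes> w"
  using mul_le_mono_iff[of x y w] pos_iff[of w] by (cases "w = Z") auto
lemma mul_le_mono_l: "x \<in> C \<Longrightarrow> y \<in> C \<Longrightarrow> w \<in> C \<Longrightarrow> x \<preceq> y \<Longrightarrow> w \<otimes> x \<preceq> w \<otimes> y"
  using mul_le_mono_r[of x y w] mul_comm[of w x] mul_comm[of w y] by simp
lemma mul_le_mono: "a \<in> C \<Longrightarrow> b \<in> C \<Longrightarrow> c \<in> C \<Longrightarrow> d \<in> C \<Longrightarrow> a \<preceq> b \<Longrightarrow> c \<preceq> d \<Longrightarrow> a \<otimes> c \<preceq> b \<otimes> d"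
  using mul_le_mono_r[of a b c] mul_le_mono_l[of c d b] le_trans[of "a \<otimes> c" "b \<otimes> c" "b \<otimes> d"] by simp
lemma mul_pos: "x \<in> C \<Longrightarrow> y \<in> C \<Longrightarrow> Z \<prec> x \<Longrightarrow> Z \<prec> y \<Longrightarrow> Z \<prec> x \<otimes> y"
  using mul_lt_mono[of Z x y] by simp
lemma mul_eq_0: "x \<in> C \<Longrightarrow> y \<in> C \<Longrightarrow> x \<otimes> y = Z \<longleftrightarrow> x = Z \<or> y = Z"
  using mul_pos[of x y] pos_iff[of x] pos_iff[of y] pos_iff[of "x \<otimes> y"] by auto
lemma le_mul: "x \<in> C \<Longrightarrow> y \<in> C \<Longrightarrow> Z \<prec> y \<Longrightarrow> x \<preceq> x \<otimes> y"
  using mul_le_mono_l[of U y x] pos_ge1[of y] by simp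

lemma mul_eq_1: "x \<in> C \<Longrightarrow> y \<in> C \<Longrightarrow> x \<otimes> y = U \<Longrightarrow> x = U"
proof -
  assume a: "x \<in> C" "y \<in> C" "x \<otimes> y = U"
  then have "x \<noteq> Z" "y \<noteq> Z" by auto
  then have "x \<preceq> U" using a le_mul[of x y] pos_iff[of y] by simp
  moreover have "U \<preceq> x" using \<open>x \<noteq> Z\<close> a pos_ge1 pos_iff by blast
  ultimately show ?thesis using a le_antisym[of x U] by auto
qed

lemma lt_1_iff: "x \<in> C \<Longrightarrow> x \<prec> U \<longleftrightarrow> x = Z"
  using pos_ge1[of x] not_lt[of x U] pos_iff[of x] by auto

lemma num_Suc: "num M (Suc n) = num M n \<oplus> U"
  by (cases n) auto
lemma num_carrier[simp]: "num M n \<in> C"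
  by (induct n) (auto simp: num_Suc)
lemma num_add: "num M (m + n) = num M m \<oplus> num M n"
  by (induct n) (auto simp: num_Suc add_assoc)
lemma num_mul: "num M (m * n) = num M m \<otimes> num M n"
  by (induct n) (auto simp: num_Suc num_add distrib_left add_comm)

lemma num_lt: "num M m \<prec> num M n \<longleftrightarrow> m < n"
proof -
  have 1: "m < n \<Longrightarrow> num M m \<prec> num M n" for m n
  proof (induct n)
    case (Suc n)
    have "num M n \<prec> num M (Suc n)" using lt_succ[of "num M n"] num_Suc by simp
    then show ?case using Suc lt_trans[of "num M m" "num M n" "num M (Suc n)"]
      by (cases "m = n") (auto simp: less_Suc_eq)
  qed simp
  show ?thesis using 1[of m n] 1[of n m] lt_asym[of "num M m" "num M n"] by (cases m n rule: linorder_cases) auto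
qed

lemma num_le: "num M m \<preceq> num M n \<longleftrightarrow> m \<le> n"
  using not_lt[of "num M n" "num M m"] num_lt[of n m] by (metis num_carrier not_less)

lemma below_num: "x \<in> C \<Longrightarrow> x \<prec> num M n \<Longrightarrow> \<exists>k<n. x = num M k"
proof (induct n arbitrary: x)
  case 0 then show ?case using not_lt[of x Z] by simp
next
  case (Suc n)
  then have "x \<preceq> num M n" using num_Suc le_succ_iff[of x "num M n"] by simp
  then show ?case using Suc le_iff[of x "num M n"] by (auto intro: less_SucI)
qed

lemma nsm_Suc: "y \<in> C \<Longrightarrow> nsm M (Suc n) y = nsm M n y \<oplus> y" by (cases n) auto
lemma nsm_carrier[simp]: "y \<in> C \<Longrightarrow> nsm M n y \<in> C" by (induct n) (auto simp: nsm_Suc)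
lemma nsm_num: "y \<in> C \<Longrightarrow> nsm M n y = num M n \<otimes> y"
  by (induct n) (auto simp: num_Suc distrib_right nsm_Suc)

lemma sigma1_induct:
  assumes "sigma1 p" "range r \<subseteq> C" "\<And>a. a \<in> C \<Longrightarrow> sat M (r(x := a)) p = Q a"
    "Q Z" "\<And>a. a \<in> C \<Longrightarrow> Q a \<Longrightarrow> Q (a \<oplus> U)" "a \<in> C"
  shows "Q a"
proof -
  have "induction_inst M p x" using model_induction assms(1) by blast
  then have "sat M (r(x := zer M)) p \<and> (\<forall>a\<in>C. sat M (r(x := a)) p \<longrightarrow> sat M (r(x := pl M a (one M))) p)
        \<longrightarrow> (\<forall>a\<in>C. sat M (r(x := a)) p)"
    unfolding induction_inst_def using assms(2) by blast
  moreover have "sat M (r(x := zer M)) p" using assms(3)[of Z] assms(4) by simp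
  moreover have "\<forall>a\<in>C. sat M (r(x := a)) p \<longrightarrow> sat M (r(x := pl M a (one M))) p"
    using assms(3,5) by simp
  ultimately show ?thesis using assms(3,6) by simp
qed

lemma delta0_strong_induct:
  assumes "delta0 p" "x \<noteq> y" "range r \<subseteq> C"
    "\<And>a c. a \<in> C \<Longrightarrow> c \<in> C \<Longrightarrow> sat M (r(x := a, y := c)) p = Q c"
    "\<And>a. a \<in> C \<Longrightarrow> (\<And>c. c \<in> C \<Longrightarrow> c \<prec> a \<Longrightarrow> Q c) \<Longrightarrow> Q a" "a \<in> C"
  shows "Q a"
proof -
  let ?q = "Allf y (Impf (Lef (V y) (V x)) p)"
  have d: "sigma1 ?q" using assms(1,2) by (auto intro!: sigma1.intros delta0.intros)
  have s: "sat M (r(x := a)) ?q = (\<forall>c\<in>C. c \<preceq> a \<longrightarrow> Q c)" if "a \<in> C" for a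
  proof -
    have "sat M (r(x := a)) ?q = (\<forall>c\<in>C. c \<preceq> a \<longrightarrow> sat M (r(x := a, y := c)) p)"
      using assms(2) by simp
    then show ?thesis using assms(4) that by simp
  qed
  have lZ: "\<not> c \<prec> Z" if "c \<in> C" for c using that not_lt[of c Z] by simp
  have QZ: "Q Z" using assms(5)[of Z] lZ by simp
  have base: "\<forall>c\<in>C. c \<preceq> Z \<longrightarrow> Q c"
  proof (intro ballI impI)
    fix c assume "c \<in> C" "c \<preceq> Z"
    then have "c = Z" using le_antisym by simp
    then show "Q c" using QZ by simp
  qed
  have step: "\<forall>c\<in>C. c \<preceq> a \<oplus> U \<longrightarrow> Q c" if a: "a \<in> C" "\<forall>c\<in>C. c \<preceq> a \<longrightarrow> Q c" for a
  proof (intro ballI impI)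
    have "Q (a \<oplus> U)" using assms(5)[of "a \<oplus> U"] a le_succ_iff by simp
    moreover fix c assume c: "c \<in> C" "c \<preceq> a \<oplus> U"
    moreover have "c \<prec> a \<oplus> U \<Longrightarrow> c \<preceq> a" using le_succ_iff a c by simp
    ultimately show "Q c" using a le_iff[of c] by auto
  qed
  have "\<forall>c\<in>C. c \<preceq> a \<longrightarrow> Q c"
    by (rule sigma1_induct[OF d assms(3) s base step assms(6)])
  then show ?thesis using assms(6) by auto
qed

lemma delta0_least_number:
  assumes "delta0 p" "x \<noteq> y" "range r \<subseteq> C"
    "\<And>a c. a \<in> C \<Longrightarrow> c \<in> C \<Longrightarrow> sat M (r(x := a, y := c)) p = S c"
    "c \<in> C" "S c"
  shows "\<exists>c\<in>C. S c \<and> (\<forall>c'\<in>C. c' \<prec> c \<longrightarrow> \<not> S c')"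
proof (rule ccontr)
  assume h: "\<not> ?thesis"
  have d: "delta0 (Negf p)" using assms(1) by (rule delta0.intros)
  have s: "\<And>a c. a \<in> C \<Longrightarrow> c \<in> C \<Longrightarrow> sat M (r(x := a, y := c)) (Negf p) = (\<not> S c)"
    using assms(4) by simp
  have st: "\<not> S a" if "a \<in> C" "\<And>c. c \<in> C \<Longrightarrow> c \<prec> a \<Longrightarrow> \<not> S c" for a
    using h that by blast
  have "\<not> S c" by (rule delta0_strong_induct[OF d assms(2,3) s st assms(5)])
  then show False using assms(6) by blast
qed

lemma division_exists:
  assumes m: "m \<in> C" "Z \<prec> m" and x: "x \<in> C"
  shows "\<exists>q\<in>C. \<exists>r\<in>C. x = q \<otimes> m \<oplus> r \<and> r \<prec> m"
proof -
  let ?p = "Exf 2 (Conjf (Lef (V 2) (V 0)) (Exf 3 (Conjf (Lef (V 3) (V 0))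
              (Conjf (Eqf (V 0) (Pt (Tt (V 2) (V 1)) (V 3))) (Conjf (Lef (V 3) (V 1)) (Negf (Eqf (V 3) (V 1))))))))"
  let ?Q = "\<lambda>x. \<exists>q\<in>C. q \<preceq> x \<and> (\<exists>r\<in>C. r \<preceq> x \<and> x = q \<otimes> m \<oplus> r \<and> r \<prec> m)"
  have d: "sigma1 ?p" by (auto intro!: sigma1.intros delta0.intros)
  have r: "range ((\<lambda>_. Z)(1 := m)) \<subseteq> C" using m by auto
  have sat: "\<And>a. a \<in> C \<Longrightarrow> sat M (((\<lambda>_. Z)(1 := m))(0 := a)) ?p = ?Q a"
    by (auto simp: lt_def)
  have base: "?Q Z" using m by (intro bexI[of _ Z] conjI) auto
  have step: "?Q (a \<oplus> U)" if a: "a \<in> C" "?Q a" for a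
  proof -
    obtain q r where qr: "q \<in> C" "r \<in> C" "q \<preceq> a" "r \<preceq> a" "a = q \<otimes> m \<oplus> r" "r \<prec> m" using a by blast
    have "r \<oplus> U \<preceq> m" using qr m lt_succ_le[of r m] by blast
    then consider "r \<oplus> U \<prec> m" | "r \<oplus> U = m" using le_iff[of "r \<oplus> U" m] qr by auto
    then show "?Q (a \<oplus> U)"
    proof cases
      case 1
      have "a \<oplus> U = q \<otimes> m \<oplus> (r \<oplus> U)" using qr m add_assoc[of "q \<otimes> m" r U] by simp
      moreover have "q \<preceq> a \<oplus> U" using qr a le_add[of a U] le_trans[of q a "a \<oplus> U"] by simp
      moreover have "r \<oplus> U \<preceq> a \<oplus> U" using qr a add_le_mono_iff[of r a U] by simp
      ultimately show ?thesis using 1 qr by (intro bexI[of _ q] conjI bexI[of _ "r \<oplus> U"]) auto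
    next
      case 2
      have e: "a \<oplus> U = (q \<oplus> U) \<otimes> m \<oplus> Z" using qr 2 m add_assoc[of "q \<otimes> m" r U] distrib_right[of m q U] by simp
      have "q \<otimes> m \<preceq> a" using qr le_add[of "q \<otimes> m" r] m by simp
      moreover have "q \<preceq> q \<otimes> m" using le_mul qr m by blast
      ultimately have "q \<preceq> a" using le_trans[of q "q \<otimes> m" a] qr m a by simp
      then have "q \<oplus> U \<preceq> a \<oplus> U" using qr a add_le_mono_iff[of q a U] by simp
      then show ?thesis using e m a qr by (intro bexI[of _ "q \<oplus> U"] conjI bexI[of _ Z]) auto
    qed
  qed
  have "?Q x" by (rule sigma1_induct[OF d r sat base step x])
  then show ?thesis by blast
qed

lemma division_unique:
  assumes C: "m \<in> C" "q \<in> C" "r \<in> C" "q' \<in> C" "r' \<in> C"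
    and e: "q \<otimes> m \<oplus> r = q' \<otimes> m \<oplus> r'" "r \<prec> m" "r' \<prec> m"
  shows "q = q' \<and> r = r'"
proof -
  have *: False if "q \<prec> q'" "q \<otimes> m \<oplus> r = q' \<otimes> m \<oplus> r'" "r \<prec> m" "q\<in>C" "q'\<in>C" "r\<in>C" "r'\<in>C" for q q' r r'
  proof -
    have "q \<oplus> U \<preceq> q'" using that lt_succ_le by blast
    then have "(q \<oplus> U) \<otimes> m \<preceq> q' \<otimes> m" using mul_le_mono_r that C by simp
    moreover have "(q \<oplus> U) \<otimes> m = q \<otimes> m \<oplus> m" using distrib_right[of m q U] that C by simp
    moreover have "q' \<otimes> m \<preceq> q' \<otimes> m \<oplus> r'" using le_add that C by simp
    ultimately have "q \<otimes> m \<oplus> m \<preceq> q' \<otimes> m \<oplus> r'" using le_trans[of "q \<otimes> m \<oplus> m" "q' \<otimes> m" "q' \<otimes> m \<oplus> r'"] that C by simp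
    moreover have "q \<otimes> m \<oplus> r \<prec> q \<otimes> m \<oplus> m" using that C add_lt_mono_iff2[of r m "q \<otimes> m"] by simp
    ultimately show False using that C lt_le_trans[of "q \<otimes> m \<oplus> r" "q \<otimes> m \<oplus> m" "q' \<otimes> m \<oplus> r'"] by simp
  qed
  have "q = q'" using *[of q q' r r'] *[of q' q r' r] e C trichotomy[of q q'] by auto
  then show ?thesis using e C add_cancel2 by simp
qed

text \<open>Quotient and remainder are only meaningful for \<open>Z \<prec> m\<close>; otherwise the \<open>SOME\<close> is unconstrained.\<close>
definition quo where "quo x m = (SOME q. q \<in> C \<and> (\<exists>r\<in>C. x = q \<otimes> m \<oplus> r \<and> r \<prec> m))"
definition rem where "rem x m = (SOME r. r \<in> C \<and> x = quo x m \<otimes> m \<oplus> r \<and> r \<prec> m)"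

lemma quo_rem:
  assumes "m \<in> C" "Z \<prec> m" "x \<in> C"
  shows "quo x m \<in> C" "rem x m \<in> C" "x = quo x m \<otimes> m \<oplus> rem x m" "rem x m \<prec> m"
proof -
  have "\<exists>q. q \<in> C \<and> (\<exists>r\<in>C. x = q \<otimes> m \<oplus> r \<and> r \<prec> m)" using division_exists[OF assms] by blast
  then have 1: "quo x m \<in> C \<and> (\<exists>r\<in>C. x = quo x m \<otimes> m \<oplus> r \<and> r \<prec> m)"
    unfolding quo_def by (rule someI_ex)
  then have "\<exists>r. r \<in> C \<and> x = quo x m \<otimes> m \<oplus> r \<and> r \<prec> m" by blast
  then have 2: "rem x m \<in> C \<and> x = quo x m \<otimes> m \<oplus> rem x m \<and> rem x m \<prec> m"
    unfolding rem_def by (rule someI_ex)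
  show "quo x m \<in> C" "rem x m \<in> C" "x = quo x m \<otimes> m \<oplus> rem x m" "rem x m \<prec> m" using 1 2 by auto
qed

lemma rem_carrier[simp]: "m \<in> C \<Longrightarrow> Z \<prec> m \<Longrightarrow> x \<in> C \<Longrightarrow> rem x m \<in> C" using quo_rem by blast

lemma rem_unique:
  assumes "m \<in> C" "Z \<prec> m" "q \<in> C" "r \<in> C" "x = q \<otimes> m \<oplus> r" "r \<prec> m"
  shows "rem x m = r" "quo x m = q"
  using division_unique[of m "quo x m" "rem x m" q r] quo_rem[of m x] assms by auto

lemma remE:
  assumes "m \<in> C" "Z \<prec> m" "x \<in> C"
  obtains q r where "q \<in> C" "r \<in> C" "x = q \<otimes> m \<oplus> r" "r \<prec> m" "rem x m = r"
  using quo_rem[OF assms] by blast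

lemma rem_add_mult:
  assumes "m \<in> C" "Z \<prec> m" "x \<in> C" "k \<in> C"
  shows "rem (x \<oplus> k \<otimes> m) m = rem x m"
proof -
  obtain q r where qr: "q \<in> C" "r \<in> C" "x = q \<otimes> m \<oplus> r" "r \<prec> m" "rem x m = r" by (rule remE[OF assms(1-3)])
  have "x \<oplus> k \<otimes> m = (q \<otimes> m \<oplus> r) \<oplus> k \<otimes> m" using qr(3) by simp
  also have "\<dots> = q \<otimes> m \<oplus> (r \<oplus> k \<otimes> m)" by (rule add_assoc) (use qr assms in auto)
  also have "\<dots> = q \<otimes> m \<oplus> (k \<otimes> m \<oplus> r)" using add_comm[of r "k \<otimes> m"] qr assms by simp
  also have "\<dots> = (q \<otimes> m \<oplus> k \<otimes> m) \<oplus> r" by (rule add_assoc[symmetric]) (use qr assms in auto)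
  also have "\<dots> = (q \<oplus> k) \<otimes> m \<oplus> r" using distrib_right[of m q k] qr assms by simp
  finally have e: "x \<oplus> k \<otimes> m = (q \<oplus> k) \<otimes> m \<oplus> r" .
  show ?thesis using rem_unique(1)[OF _ _ _ _ e] qr assms by simp
qed

lemma rem_mult_self: "m \<in> C \<Longrightarrow> Z \<prec> m \<Longrightarrow> k \<in> C \<Longrightarrow> rem (k \<otimes> m) m = Z"
  using rem_add_mult[of m Z k] rem_unique[of m Z Z Z] by simp
lemma rem_small: "m \<in> C \<Longrightarrow> Z \<prec> m \<Longrightarrow> x \<in> C \<Longrightarrow> x \<prec> m \<Longrightarrow> rem x m = x"
  using rem_unique[of m Z x x] by simp
lemma rem_lt: "m \<in> C \<Longrightarrow> Z \<prec> m \<Longrightarrow> x \<in> C \<Longrightarrow> rem x m \<prec> m"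
  using quo_rem by blast
lemma rem_rem: "m \<in> C \<Longrightarrow> Z \<prec> m \<Longrightarrow> x \<in> C \<Longrightarrow> rem (rem x m) m = rem x m"
  using rem_small[of m "rem x m"] rem_lt[of m x] by simp

lemma rem_add: "m \<in> C \<Longrightarrow> Z \<prec> m \<Longrightarrow> x \<in> C \<Longrightarrow> y \<in> C \<Longrightarrow> rem (x \<oplus> y) m = rem (rem x m \<oplus> y) m"
proof -
  assume a: "m \<in> C" "Z \<prec> m" "x \<in> C" "y \<in> C"
  obtain q r where qr: "q \<in> C" "r \<in> C" "x = q \<otimes> m \<oplus> r" "r \<prec> m" "rem x m = r" by (rule remE[OF a(1-3)])
  have "x \<oplus> y = (r \<oplus> y) \<oplus> q \<otimes> m" using qr a
    add_comm[of "q \<otimes> m" r] add_assoc[of r "q \<otimes> m" y]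
    add_assoc[of r y "q \<otimes> m"] add_comm[of "q \<otimes> m" y] by simp
  then show ?thesis using rem_add_mult[of m "r \<oplus> y" q] a qr by simp
qed

lemma rem_mul: "m \<in> C \<Longrightarrow> Z \<prec> m \<Longrightarrow> x \<in> C \<Longrightarrow> y \<in> C \<Longrightarrow> rem (x \<otimes> y) m = rem (rem x m \<otimes> y) m"
proof -
  assume a: "m \<in> C" "Z \<prec> m" "x \<in> C" "y \<in> C"
  obtain q r where qr: "q \<in> C" "r \<in> C" "x = q \<otimes> m \<oplus> r" "r \<prec> m" "rem x m = r" by (rule remE[OF a(1-3)])
  have "x \<otimes> y = (q \<otimes> m) \<otimes> y \<oplus> r \<otimes> y" using qr a distrib_right[of y "q \<otimes> m" r] by simp
  also have "(q \<otimes> m) \<otimes> y = (q \<otimes> y) \<otimes> m" using qr a mul_assoc[of q m y]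
    mul_assoc[of q y m] mul_comm[of m y] by simp
  finally have "x \<otimes> y = (r \<otimes> y) \<oplus> (q \<otimes> y) \<otimes> m"
    using qr a add_comm[of "(q \<otimes> y) \<otimes> m" "r \<otimes> y"] by simp
  then show ?thesis using rem_add_mult[of m "r \<otimes> y" "q \<otimes> y"] a qr by simp
qed

definition cong_mod where "cong_mod m x y \<longleftrightarrow> rem x m = rem y m"
lemma cong_mod_add: "m \<in> C \<Longrightarrow> Z \<prec> m \<Longrightarrow> x \<in> C \<Longrightarrow> y \<in> C \<Longrightarrow> z \<in> C \<Longrightarrow> cong_mod m x y \<Longrightarrow> cong_mod m (x \<oplus> z) (y \<oplus> z)"
  unfolding cong_mod_def using rem_add[of m x z] rem_add[of m y z] by simp
lemma cong_mod_mul: "m \<in> C \<Longrightarrow> Z \<prec> m \<Longrightarrow> x \<in> C \<Longrightarrow> y \<in> C \<Longrightarrow> z \<in> C \<Longrightarrow> cong_mod m x y \<Longrightarrow> cong_mod m (x \<otimes> z) (y \<otimes> z)"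
  unfolding cong_mod_def using rem_mul[of m x z] rem_mul[of m y z] by simp

lemma cong_mod_add2:
  "m \<in> C \<Longrightarrow> Z \<prec> m \<Longrightarrow> x \<in> C \<Longrightarrow> y \<in> C \<Longrightarrow> x' \<in> C \<Longrightarrow> y' \<in> C \<Longrightarrow>
    cong_mod m x y \<Longrightarrow> cong_mod m x' y' \<Longrightarrow> cong_mod m (x \<oplus> x') (y \<oplus> y')"
  using cong_mod_add[of m x y x'] cong_mod_add[of m x' y' y] add_comm[of x' y] add_comm[of y' y]
  unfolding cong_mod_def by simp

lemma cong_mod_sym: "cong_mod m x y \<Longrightarrow> cong_mod m y x" unfolding cong_mod_def by simp
lemma cong_mod_trans[trans]: "cong_mod m x y \<Longrightarrow> cong_mod m y z \<Longrightarrow> cong_mod m x z" unfolding cong_mod_def by simp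
lemma cong_mod_rem: "m \<in> C \<Longrightarrow> Z \<prec> m \<Longrightarrow> x \<in> C \<Longrightarrow> cong_mod m (rem x m) x" unfolding cong_mod_def by (simp add: rem_rem)

lemma dvd_rem: "d \<in> C \<Longrightarrow> Z \<prec> d \<Longrightarrow> n \<in> C \<Longrightarrow> dvd_in M d n \<longleftrightarrow> rem n d = Z"
proof
  assume a: "d \<in> C" "Z \<prec> d" "n \<in> C" "dvd_in M d n"
  then obtain q where "q \<in> C" "n = d \<otimes> q" unfolding dvd_in_def by blast
  then show "rem n d = Z" using rem_mult_self[of d q] a mul_comm[of d q] by simp
next
  assume a: "d \<in> C" "Z \<prec> d" "n \<in> C" "rem n d = Z"
  obtain q r where qr: "q \<in> C" "r \<in> C" "n = q \<otimes> d \<oplus> r" "r \<prec> d" "rem n d = r" by (rule remE[OF a(1-3)])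
  then have "n = d \<otimes> q" using a mul_comm[of d q] by simp
  then show "dvd_in M d n" unfolding dvd_in_def using qr by auto
qed

lemma dvd_refl[simp]: "x \<in> C \<Longrightarrow> dvd_in M x x" unfolding dvd_in_def by (intro bexI[of _ U]) auto
lemma dvd_0[simp]: "x \<in> C \<Longrightarrow> dvd_in M x Z" unfolding dvd_in_def by (intro bexI[of _ Z]) auto
lemma dvd_1[simp]: "x \<in> C \<Longrightarrow> dvd_in M U x" unfolding dvd_in_def by (intro bexI[of _ x]) auto
lemma dvd_mulR: "x \<in> C \<Longrightarrow> y \<in> C \<Longrightarrow> dvd_in M x (x \<otimes> y)" unfolding dvd_in_def by blast
lemma dvd_mulL: "x \<in> C \<Longrightarrow> y \<in> C \<Longrightarrow> dvd_in M x (y \<otimes> x)" unfolding dvd_in_def using mul_comm[of y x] by blast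
lemma dvd_trans: "a \<in> C \<Longrightarrow> b \<in> C \<Longrightarrow> c \<in> C \<Longrightarrow> dvd_in M a b \<Longrightarrow> dvd_in M b c \<Longrightarrow> dvd_in M a c"
  unfolding dvd_in_def using mul_assoc by (smt (verit) tm_carrier)
lemma dvd_mul: "a \<in> C \<Longrightarrow> b \<in> C \<Longrightarrow> c \<in> C \<Longrightarrow> dvd_in M a b \<Longrightarrow> dvd_in M a (b \<otimes> c)"
  using dvd_trans[of a b "b \<otimes> c"] dvd_mulR[of b c] by simp
lemma dvd_mul2: "a \<in> C \<Longrightarrow> b \<in> C \<Longrightarrow> c \<in> C \<Longrightarrow> dvd_in M a b \<Longrightarrow> dvd_in M a (c \<otimes> b)"
  using dvd_mul[of a b c] mul_comm[of b c] by simp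

lemma dvd_add: assumes "a \<in> C" "b \<in> C" "c \<in> C" "dvd_in M a b" "dvd_in M a c" shows "dvd_in M a (b \<oplus> c)"
proof -
  obtain q q' where q: "q \<in> C" "b = a \<otimes> q" "q' \<in> C" "c = a \<otimes> q'" using assms unfolding dvd_in_def by blast
  then show ?thesis unfolding dvd_in_def using distrib_left[of a q q'] assms by (intro bexI[of _ "q \<oplus> q'"]) auto
qed

lemma dvd_0_iff: "x \<in> C \<Longrightarrow> dvd_in M Z x \<longleftrightarrow> x = Z" unfolding dvd_in_def by auto

lemma dvd_sub:
  assumes "d \<in> C" "a \<in> C" "b \<in> C" "dvd_in M d (a \<oplus> b)" "dvd_in M d a"
  shows "dvd_in M d b"
proof (cases "d = Z")
  case True then show ?thesis using assms dvd_0_iff[of a] dvd_0_iff[of "a \<oplus> b"] dvd_0_iff[of b] by simp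
next
  case False
  then have d: "Z \<prec> d" using pos_iff assms by blast
  have "rem (a \<oplus> b) d = rem (rem a d \<oplus> b) d" using rem_add assms d by blast
  then show ?thesis using assms d dvd_rem[of d a] dvd_rem[of d b] dvd_rem[of d "a \<oplus> b"] by simp
qed

lemma dvd_le: assumes "d \<in> C" "n \<in> C" "n \<noteq> Z" "dvd_in M d n" shows "d \<preceq> n"
proof -
  obtain q where q: "q \<in> C" "n = d \<otimes> q" using assms unfolding dvd_in_def by blast
  then have "q \<noteq> Z" using assms by auto
  then show ?thesis using le_mul[of d q] q assms pos_iff[of q] by simp
qed

lemma dvd_U: "d \<in> C \<Longrightarrow> dvd_in M d U \<Longrightarrow> d = U"
  unfolding dvd_in_def using mul_eq_1 by (metis one_carrier)

lemma cong_mod_dvd: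
  assumes "m \<in> C" "Z \<prec> m" "x \<in> C" "y \<in> C" "d \<in> C" "cong_mod m x y" "dvd_in M d m" "dvd_in M d x"
  shows "dvd_in M d y"
proof -
  obtain q r where qr: "q \<in> C" "r \<in> C" "x = q \<otimes> m \<oplus> r" "r \<prec> m" "rem x m = r" by (rule remE[OF assms(1-3)])
  obtain q' r' where qr': "q' \<in> C" "r' \<in> C" "y = q' \<otimes> m \<oplus> r'" "r' \<prec> m" "rem y m = r'" by (rule remE[OF assms(1,2,4)])
  have "dvd_in M d (q \<otimes> m)" using dvd_mul2[of d m q] assms qr by simp
  then have "dvd_in M d r"
    using dvd_sub[of d "q \<otimes> m" r] qr assms by simp
  then have "dvd_in M d r'" using assms cong_mod_def qr qr' by simp
  moreover have "dvd_in M d (q' \<otimes> m)" using dvd_mul2[of d m q'] assms qr' by simp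
  ultimately show ?thesis using qr' assms dvd_add[of d "q' \<otimes> m" r'] by simp
qed

lemma least_nonzero_residue:
  assumes m: "m \<in> C" "Z \<prec> m" and l: "l \<in> C" "\<not> dvd_in M m l"
  obtains s0 where "s0 \<in> C" "rem (s0 \<otimes> l) m \<noteq> Z"
    "\<And>s. s \<in> C \<Longrightarrow> rem (s \<otimes> l) m \<noteq> Z \<Longrightarrow> rem (s0 \<otimes> l) m \<preceq> rem (s \<otimes> l) m"
proof -
  define S where "S c \<longleftrightarrow> c \<noteq> Z \<and> (\<exists>s\<in>C. s \<preceq> m \<and> (\<exists>k\<in>C. k \<preceq> s \<otimes> l \<and> s \<otimes> l = k \<otimes> m \<oplus> c \<and> c \<prec> m))" for c
  have S_iff: "S c \<longleftrightarrow> c \<noteq> Z \<and> (\<exists>s\<in>C. s \<preceq> m \<and> rem (s \<otimes> l) m = c)" if c: "c \<in> C" for c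
  proof
    assume "S c"
    then obtain s k where sk: "c \<noteq> Z" "s \<in> C" "s \<preceq> m" "k \<in> C" "s \<otimes> l = k \<otimes> m \<oplus> c" "c \<prec> m"
      unfolding S_def by blast
    then have "rem (s \<otimes> l) m = c" using rem_unique(1)[of m k c "s \<otimes> l"] m c by simp
    then show "c \<noteq> Z \<and> (\<exists>s\<in>C. s \<preceq> m \<and> rem (s \<otimes> l) m = c)" using sk by blast
  next
    assume h: "c \<noteq> Z \<and> (\<exists>s\<in>C. s \<preceq> m \<and> rem (s \<otimes> l) m = c)"
    then obtain s where s: "s \<in> C" "s \<preceq> m" "rem (s \<otimes> l) m = c" by blast
    obtain k r where kr: "k \<in> C" "r \<in> C" "s \<otimes> l = k \<otimes> m \<oplus> r" "r \<prec> m" "rem (s \<otimes> l) m = r"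
      by (rule remE[of m "s \<otimes> l"]) (use m l s in auto)
    have "k \<preceq> k \<otimes> m" using le_mul[of k m] m kr by simp
    moreover have "k \<otimes> m \<preceq> s \<otimes> l" using kr le_add[of "k \<otimes> m" r] m by simp
    ultimately have "k \<preceq> s \<otimes> l" using le_trans[of k "k \<otimes> m" "s \<otimes> l"] m l s kr by simp
    then show "S c" unfolding S_def using h s kr by (intro conjI bexI[of _ s] bexI[of _ k]) auto
  qed
  let ?p = "Conjf (Negf (Eqf (V 1) Zt)) (Exf 4 (Conjf (Lef (V 4) (V 3)) (Exf 5 (Conjf (Lef (V 5) (Tt (V 4) (V 2)))
     (Conjf (Eqf (Tt (V 4) (V 2)) (Pt (Tt (V 5) (V 3)) (V 1))) (Conjf (Lef (V 1) (V 3)) (Negf (Eqf (V 1) (V 3)))))))))"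
  have dp: "delta0 ?p" by (auto intro!: delta0.intros)
  have rr: "range ((\<lambda>_. Z)(2 := l, 3 := m)) \<subseteq> C" using m l by auto
  have sat: "sat M (((\<lambda>_. Z)(2 := l, 3 := m))(0 := a, 1 := c)) ?p = S c" if "a \<in> C" "c \<in> C" for a c
    unfolding S_def by (auto simp: lt_def)
  have lmC: "rem l m \<in> C" using m l by simp
  have "rem l m \<noteq> Z" using dvd_rem[of m l] m l by blast
  moreover have "U \<preceq> m" using pos_ge1 m by blast
  ultimately have "S (rem l m)" unfolding S_iff[OF lmC] using m l by (intro conjI bexI[of _ U]) auto
  then have "\<exists>c\<in>C. S c \<and> (\<forall>c'\<in>C. c' \<prec> c \<longrightarrow> \<not> S c')"
    by (intro delta0_least_number[OF dp _ rr sat lmC]) auto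
  then obtain d where d: "d \<in> C" "S d" "\<forall>c'\<in>C. c' \<prec> d \<longrightarrow> \<not> S c'" by blast
  then obtain s0 where s0: "s0 \<in> C" "s0 \<preceq> m" "rem (s0 \<otimes> l) m = d" "d \<noteq> Z" using S_iff by blast
  have "d \<preceq> rem (s \<otimes> l) m" if s: "s \<in> C" "rem (s \<otimes> l) m \<noteq> Z" for s
  proof -
    have "rem (rem s m \<otimes> l) m = rem (s \<otimes> l) m" using rem_mul[of m s l] m l s by simp
    moreover have "rem s m \<preceq> m" using rem_lt[of m s] m s lt_imp_le by auto
    ultimately have "S (rem (s \<otimes> l) m)" using S_iff[of "rem (s \<otimes> l) m"] m l s by auto
    then show ?thesis using d not_lt[of "rem (s \<otimes> l) m" d] m l s by auto
  qed
  then show ?thesis using that s0 by blast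
qed

lemma inverse_mod_exists:
  assumes m: "m \<in> C" "U \<prec> m" and l: "l \<in> C" and cop: "coprime_in M l m"
  shows "\<exists>s\<in>C. rem (s \<otimes> l) m = U"
proof -
  have m0: "Z \<prec> m" using m lt_trans[of Z U m] by simp
  have "\<not> dvd_in M m l" using cop m unfolding coprime_in_def by auto
  then obtain s0 where s0: "s0 \<in> C" "rem (s0 \<otimes> l) m \<noteq> Z"
    and least: "\<And>s. s \<in> C \<Longrightarrow> rem (s \<otimes> l) m \<noteq> Z \<Longrightarrow> rem (s0 \<otimes> l) m \<preceq> rem (s \<otimes> l) m"
    using least_nonzero_residue m0 m l by blast
  define d where "d = rem (s0 \<otimes> l) m"
  have d: "d \<in> C" "Z \<prec> d" using s0 m0 m l pos_iff unfolding d_def by auto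
  obtain m1 where m1: "m1 \<in> C" "m1 \<oplus> U = m" using lt_ex[of U m] m add_comm[of U] by auto
  \<comment> \<open>Residues of multiples of l are closed under subtracting multiples of d (add m - 1 times them),
    so the least one, d, divides each of them; m and l are such residues.\<close>
  have dvd_d: "dvd_in M d y" if y: "y \<in> C" "t \<in> C" "cong_mod m (t \<otimes> l) y" for y t
  proof -
    obtain q \<rho> where qr: "q \<in> C" "\<rho> \<in> C" "y = q \<otimes> d \<oplus> \<rho>" "\<rho> \<prec> d"
      by (rule remE[of d y]) (use d y in auto)
    let ?s = "t \<oplus> (m1 \<otimes> q) \<otimes> s0"
    have "?s \<otimes> l = t \<otimes> l \<oplus> (m1 \<otimes> q) \<otimes> (s0 \<otimes> l)"
      using y qr m1 s0 l by (simp add: arith_simps)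
    then have "cong_mod m (?s \<otimes> l) (t \<otimes> l \<oplus> (m1 \<otimes> q) \<otimes> (s0 \<otimes> l))" by (simp add: cong_mod_def)
    also have "cong_mod m \<dots> (y \<oplus> (m1 \<otimes> q) \<otimes> d)"
    proof -
      have "cong_mod m (s0 \<otimes> l) d" using cong_mod_rem[of m "s0 \<otimes> l"] cong_mod_sym s0 m0 m l unfolding d_def by auto
      then have "cong_mod m ((m1 \<otimes> q) \<otimes> (s0 \<otimes> l)) ((m1 \<otimes> q) \<otimes> d)"
        using cong_mod_mul[of m "s0 \<otimes> l" d "m1 \<otimes> q"] s0 m0 m l d qr m1 by (simp add: mul_comm[of _ "m1 \<otimes> q"])
      then show ?thesis using cong_mod_add2[of m "t \<otimes> l" y "(m1 \<otimes> q) \<otimes> (s0 \<otimes> l)" "(m1 \<otimes> q) \<otimes> d"] s0 l d qr m1 y m0 m by simp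
    qed
    also have "y \<oplus> (m1 \<otimes> q) \<otimes> d = \<rho> \<oplus> (q \<otimes> d) \<otimes> m"
      using qr m1 d by (simp add: arith_simps flip: m1(2))
    also have "cong_mod m \<dots> \<rho>" using rem_add_mult[of m \<rho> "q \<otimes> d"] m0 m qr d by (simp add: cong_mod_def)
    finally have "cong_mod m (?s \<otimes> l) \<rho>" .
    then have "rem (?s \<otimes> l) m = \<rho>"
      using rem_small[of m \<rho>] lt_trans[of \<rho> d m] rem_lt[of m "s0 \<otimes> l"] qr d m0 m s0 l
      unfolding cong_mod_def d_def by simp
    then have "\<rho> = Z" using least[of ?s] qr d not_lt[of \<rho> d] y m1 s0 l unfolding d_def by auto
    then show ?thesis using qr mul_comm[of q d] d unfolding dvd_in_def by auto
  qed
  have "cong_mod m (Z \<otimes> l) m" using rem_mult_self[of m U] rem_small[of m Z] m0 m l by (simp add: cong_mod_def)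
  moreover have "cong_mod m (U \<otimes> l) l" using l by (simp add: cong_mod_def)
  ultimately have "dvd_in M d m" "dvd_in M d l" using dvd_d[of m Z] dvd_d[of l U] m l by auto
  then have "d = U" using cop d unfolding coprime_in_def by blast
  then show ?thesis using s0 unfolding d_def by blast
qed

lemma prime_in_gt_one: "prime_in M p \<Longrightarrow> U \<prec> p" unfolding prime_in_def by blast

lemma coprime_if_not_dvd_prime:
  assumes "prime_in M p" "p \<in> C" "a \<in> C" "\<not> dvd_in M p a"
  shows "coprime_in M a p"
  unfolding coprime_in_def
proof (intro ballI impI)
  fix d assume d: "d \<in> C" "dvd_in M d a \<and> dvd_in M d p"
  then have "d = U \<or> d = p" using assms(1) unfolding prime_in_def by blast
  then show "d = U" using d assms(4) by blast
qed

lemma prime_in_dvd_mult: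
  assumes p: "prime_in M p" "p \<in> C" and ab: "a \<in> C" "b \<in> C" "dvd_in M p (a \<otimes> b)" "\<not> dvd_in M p a"
  shows "dvd_in M p b"
proof -
  have p1: "U \<prec> p" using p prime_in_gt_one by blast
  then have p0: "Z \<prec> p" using lt_trans[of Z U p] p by simp
  obtain s where s: "s \<in> C" "rem (s \<otimes> a) p = U" using inverse_mod_exists[OF p(2) p1 ab(1) coprime_if_not_dvd_prime[OF p ab(1,4)]] by blast
  have "rem ((s \<otimes> a) \<otimes> b) p = rem (rem (s \<otimes> a) p \<otimes> b) p" using rem_mul[of p "s \<otimes> a" b] p0 p s ab by simp
  also have "\<dots> = rem b p" using s ab by simp
  finally have 1: "rem ((s \<otimes> a) \<otimes> b) p = rem b p" .
  have "(s \<otimes> a) \<otimes> b = (a \<otimes> b) \<otimes> s" using s ab mul_assoc[of s a b] mul_comm[of s "a \<otimes> b"] by simp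
  moreover have "rem ((a \<otimes> b) \<otimes> s) p = rem (rem (a \<otimes> b) p \<otimes> s) p" using rem_mul[of p "a \<otimes> b" s] p0 p s ab by simp
  moreover have "rem (a \<otimes> b) p = Z" using dvd_rem[of p "a \<otimes> b"] p0 p ab by simp
  ultimately have "rem b p = rem Z p" using 1 s by simp
  then have "rem b p = Z" using rem_small[of p Z] p0 p by simp
  then show ?thesis using dvd_rem[of p b] p0 p ab by simp
qed

lemma coprime_U: "a \<in> C \<Longrightarrow> coprime_in M a U" unfolding coprime_in_def using dvd_U by blast

lemma coprime_mul:
  assumes C: "u \<in> C" "v \<in> C" "w \<in> C" and cu: "coprime_in M u w" and cv: "coprime_in M v w"
  shows "coprime_in M (u \<otimes> v) w"
proof (cases "w = Z")
  case True
  have "u = U" using cu True C unfolding coprime_in_def by auto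
  then show ?thesis using cv C by simp
next
  case False
  then consider "w = U" | "U \<prec> w" using C pos_iff[of w] lt_succ_le[of Z w] le_iff[of U w] by auto
  then show ?thesis
  proof cases
    case 1 then show ?thesis using coprime_U C by simp
  next
    case 2
    have w0: "Z \<prec> w" using 2 lt_trans[of Z U w] C by simp
    obtain s where s: "s \<in> C" "rem (s \<otimes> u) w = U" using inverse_mod_exists[OF C(3) 2 C(1) cu] by blast
    show ?thesis unfolding coprime_in_def
    proof (intro ballI impI)
      fix d assume d: "d \<in> C" "dvd_in M d (u \<otimes> v) \<and> dvd_in M d w"
      have "rem ((s \<otimes> u) \<otimes> v) w = rem (rem (s \<otimes> u) w \<otimes> v) w" using rem_mul[of w "s \<otimes> u" v] w0 C s by simp
      then have "cong_mod w ((s \<otimes> u) \<otimes> v) v" unfolding cong_mod_def using s C by simp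
      moreover have "dvd_in M d ((s \<otimes> u) \<otimes> v)"
        using dvd_mul2[of d "u \<otimes> v" s] d C s mul_assoc[of s u v] by simp
      ultimately have "dvd_in M d v" using cong_mod_dvd[of w "(s \<otimes> u) \<otimes> v" v d] w0 C s d by simp
      then show "d = U" using cv d unfolding coprime_in_def by blast
    qed
  qed
qed

subsection \<open>Goedel's \<open>\<beta>\<close>-function\<close>

definition beta_mod where "beta_mod b j = U \<oplus> (j \<oplus> U) \<otimes> b"
lemma beta_mod_carrier[simp]: "b \<in> C \<Longrightarrow> j \<in> C \<Longrightarrow> beta_mod b j \<in> C" unfolding beta_mod_def by simp

lemma beta_mod_gt1: assumes "b \<in> C" "j \<in> C" "Z \<prec> b" shows "U \<prec> beta_mod b j"
proof -
  have "Z \<prec> (j \<oplus> U) \<otimes> b" using mul_pos[of "j \<oplus> U" b] assms lt_succ[of j] le_lt_trans[of Z j "j \<oplus> U"] by simp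
  then show ?thesis unfolding beta_mod_def using add_lt_mono_iff2[of Z "(j \<oplus> U) \<otimes> b" U] assms by simp
qed

lemma beta_mod_pos: "b \<in> C \<Longrightarrow> j \<in> C \<Longrightarrow> Z \<prec> b \<Longrightarrow> Z \<prec> beta_mod b j"
  using beta_mod_gt1 lt_trans[of Z U] by (meson one_carrier zer_carrier Z_lt_U beta_mod_carrier)

lemma beta_iff: assumes "a \<in> C" "b \<in> C" "i \<in> C" "v \<in> C" "Z \<prec> b"
  shows "beta_in M a b i v \<longleftrightarrow> v = rem a (beta_mod b i)"
proof -
  have m: "beta_mod b i \<in> C" "Z \<prec> beta_mod b i" using beta_mod_pos assms by auto
  have "beta_in M a b i v \<longleftrightarrow> v \<prec> beta_mod b i \<and> (\<exists>q\<in>C. a = q \<otimes> beta_mod b i \<oplus> v)"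
    unfolding beta_in_def beta_mod_def Let_def by (simp add: add_comm)
  also have "\<dots> \<longleftrightarrow> v = rem a (beta_mod b i)"
  proof
    assume "v \<prec> beta_mod b i \<and> (\<exists>q\<in>C. a = q \<otimes> beta_mod b i \<oplus> v)"
    then show "v = rem a (beta_mod b i)" using rem_unique(1)[of "beta_mod b i"] m assms by metis
  next
    assume "v = rem a (beta_mod b i)"
    then show "v \<prec> beta_mod b i \<and> (\<exists>q\<in>C. a = q \<otimes> beta_mod b i \<oplus> v)" using quo_rem[of "beta_mod b i" a] m assms by auto
  qed
  finally show ?thesis .
qed

definition divides_all_upto where "divides_all_upto b N \<longleftrightarrow> (\<forall>t\<in>C. Z \<prec> t \<longrightarrow> t \<preceq> N \<longrightarrow> dvd_in M t b)"

lemma beta_mod_coprime: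
  assumes C: "b \<in> C" "N \<in> C" "j \<in> C" "k \<in> C" and b0: "Z \<prec> b" and divs: "divides_all_upto b N"
    and jk: "j \<prec> k" "k \<preceq> N"
  shows "coprime_in M (beta_mod b j) (beta_mod b k)"
  unfolding coprime_in_def
proof (intro ballI impI)
  fix d assume d: "d \<in> C" "dvd_in M d (beta_mod b j) \<and> dvd_in M d (beta_mod b k)"
  obtain \<delta> where de: "\<delta> \<in> C" "j \<oplus> \<delta> = k" using lt_ex[of j k] C jk by auto
  have d0: "\<delta> \<noteq> Z" using de jk C by auto
  have "(k \<oplus> U) \<otimes> beta_mod b j = (j \<oplus> U) \<otimes> beta_mod b k \<oplus> \<delta>"
  proof -
    have "k \<oplus> U = (j \<oplus> U) \<oplus> \<delta>" using de C add_assoc[of j \<delta> U] add_assoc[of j U \<delta>] add_comm[of \<delta> U] by simp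
    then have "(k \<oplus> U) \<otimes> beta_mod b j = ((j \<oplus> U) \<oplus> \<delta>) \<oplus> (k \<oplus> U) \<otimes> ((j \<oplus> U) \<otimes> b)"
      unfolding beta_mod_def using distrib_left[of "k \<oplus> U" U "(j \<oplus> U) \<otimes> b"] C de by simp
    also have "\<dots> = (j \<oplus> U) \<oplus> (j \<oplus> U) \<otimes> ((k \<oplus> U) \<otimes> b) \<oplus> \<delta>"
      using C de add_assoc[of "j \<oplus> U" \<delta>] add_comm[of \<delta>] add_assoc[of "j \<oplus> U"] mul_left_comm[of "k \<oplus> U" "j \<oplus> U" b]
      by simp
    also have "\<dots> = (j \<oplus> U) \<otimes> beta_mod b k \<oplus> \<delta>" unfolding beta_mod_def using distrib_left[of "j \<oplus> U" U "(k \<oplus> U) \<otimes> b"] C by simp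
    finally show ?thesis .
  qed
  moreover have "dvd_in M d ((k \<oplus> U) \<otimes> beta_mod b j)" using dvd_mul2[of d "beta_mod b j" "k \<oplus> U"] d C by simp
  moreover have "dvd_in M d ((j \<oplus> U) \<otimes> beta_mod b k)" using dvd_mul2[of d "beta_mod b k" "j \<oplus> U"] d C by simp
  ultimately have "dvd_in M d \<delta>" using dvd_sub[of d "(j \<oplus> U) \<otimes> beta_mod b k" \<delta>] d C de by simp
  moreover have "\<delta> \<preceq> N" using le_add2[of \<delta> j] de C jk le_trans[of \<delta> k N] by simp
  then have "dvd_in M \<delta> b" using divs d0 de pos_iff[of \<delta>] unfolding divides_all_upto_def by blast
  ultimately have "dvd_in M d b" using dvd_trans[of d \<delta> b] d de C by simp
  then have "dvd_in M d ((j \<oplus> U) \<otimes> b)" using dvd_mul2[of d b "j \<oplus> U"] d C by simp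
  then have "dvd_in M d U" using dvd_sub[of d "(j \<oplus> U) \<otimes> b" U] add_comm[of U "(j \<oplus> U) \<otimes> b"] d C unfolding beta_mod_def by simp
  then show "d = U" using dvd_U d by blast
qed

lemma beta_code_extend:
  assumes C: "b \<in> C" "N \<in> C" "i \<in> C" "a \<in> C" "L \<in> C" "w \<in> C"
    and b0: "Z \<prec> b" and iN: "i \<prec> N"
    and Ldv: "\<forall>j\<in>C. j \<preceq> i \<longrightarrow> dvd_in M (beta_mod b j) L"
    and Lcop: "\<forall>k\<in>C. i \<prec> k \<longrightarrow> k \<preceq> N \<longrightarrow> coprime_in M L (beta_mod b k)"
    and w: "w \<prec> beta_mod b (i \<oplus> U)"
  shows "\<exists>a'\<in>C. (\<forall>j\<in>C. j \<preceq> i \<longrightarrow> rem a' (beta_mod b j) = rem a (beta_mod b j)) \<and> rem a' (beta_mod b (i \<oplus> U)) = w"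
proof -
  let ?m = "beta_mod b (i \<oplus> U)"
  have m: "?m \<in> C" "U \<prec> ?m" "Z \<prec> ?m" using beta_mod_gt1[of b "i \<oplus> U"] beta_mod_pos[of b "i \<oplus> U"] C b0 by auto
  have "i \<oplus> U \<preceq> N" using iN lt_succ_le C by blast
  then have "coprime_in M L ?m" using Lcop lt_succ[of i] C by simp
  then obtain s where s: "s \<in> C" "rem (s \<otimes> L) ?m = U" using inverse_mod_exists[of ?m L] m C by blast
  obtain q c where qc: "q \<in> C" "c \<in> C" "a = q \<otimes> ?m \<oplus> c" "c \<prec> ?m" "rem a ?m = c" by (rule remE[of ?m a]) (use m C in auto)
  obtain t where t: "t \<in> C" "c \<oplus> t = ?m" using lt_ex[of c ?m] qc m by auto
  define \<delta> where "\<delta> = w \<oplus> t"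
  have dC: "\<delta> \<in> C" unfolding \<delta>_def using C t by simp
  define a' where "a' = a \<oplus> (s \<otimes> \<delta>) \<otimes> L"
  have a'C: "a' \<in> C" unfolding a'_def using C s dC by simp
  have old: "rem a' (beta_mod b j) = rem a (beta_mod b j)" if j: "j \<in> C" "j \<preceq> i" for j
  proof -
    obtain h where h: "h \<in> C" "L = beta_mod b j \<otimes> h" using Ldv j unfolding dvd_in_def by blast
    have "(s \<otimes> \<delta>) \<otimes> L = ((s \<otimes> \<delta>) \<otimes> h) \<otimes> beta_mod b j"
      using h s dC C j mul_assoc[of "s \<otimes> \<delta>" h "beta_mod b j"] mul_comm[of h "beta_mod b j"] by simp
    then show ?thesis unfolding a'_def using rem_add_mult[of "beta_mod b j" a "(s \<otimes> \<delta>) \<otimes> L"] rem_add_mult[of "beta_mod b j" a "(s \<otimes> \<delta>) \<otimes> h"]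
      beta_mod_pos[of b j] C j s dC h b0 by simp
  qed
  have new: "rem a' ?m = w"
  proof -
    have "cong_mod ?m (s \<otimes> L) U" unfolding cong_mod_def using s rem_small[of ?m U] m by simp
    then have "cong_mod ?m ((s \<otimes> L) \<otimes> \<delta>) (U \<otimes> \<delta>)" using cong_mod_mul[of ?m "s \<otimes> L" U \<delta>] m s C dC by simp
    moreover have "(s \<otimes> L) \<otimes> \<delta> = (s \<otimes> \<delta>) \<otimes> L" using s C dC mul_assoc[of s L \<delta>] mul_assoc[of s \<delta> L] mul_comm[of L \<delta>] by simp
    ultimately have "cong_mod ?m ((s \<otimes> \<delta>) \<otimes> L) \<delta>" using dC by simp
    then have "cong_mod ?m ((s \<otimes> \<delta>) \<otimes> L \<oplus> a) (\<delta> \<oplus> a)" using cong_mod_add[of ?m _ \<delta> a] m s C dC by simp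
    then have "cong_mod ?m a' (\<delta> \<oplus> a)" unfolding a'_def using add_comm[of a "(s \<otimes> \<delta>) \<otimes> L"] s C dC by simp
    moreover have "\<delta> \<oplus> a = w \<oplus> (q \<oplus> U) \<otimes> ?m"
    proof -
      have "\<delta> \<oplus> a = w \<oplus> (t \<oplus> (q \<otimes> ?m \<oplus> c))" unfolding \<delta>_def using qc C t add_assoc[of w t a] by simp
      also have "t \<oplus> (q \<otimes> ?m \<oplus> c) = q \<otimes> ?m \<oplus> (c \<oplus> t)"
        using qc t m add_comm[of t "q \<otimes> ?m \<oplus> c"] add_assoc[of "q \<otimes> ?m" c t] by simp
      also have "\<dots> = (q \<oplus> U) \<otimes> ?m" using t m qc distrib_right[of ?m q U] by simp
      finally show ?thesis .
    qed
    ultimately have "cong_mod ?m a' (w \<oplus> (q \<oplus> U) \<otimes> ?m)" by simp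
    then have "rem a' ?m = rem w ?m" unfolding cong_mod_def using rem_add_mult[of ?m w "q \<oplus> U"] m C qc by simp
    then show ?thesis using rem_small[of ?m w] m C w by simp
  qed
  show ?thesis using a'C old new by blast
qed

lemma beta_moduli_product_extend:
  assumes C: "b \<in> C" "N \<in> C" "i \<in> C" "L \<in> C"
    and b0: "Z \<prec> b" and iN: "i \<prec> N" and divs: "divides_all_upto b N" and L0: "Z \<prec> L"
    and Ldv: "\<forall>j\<in>C. j \<preceq> i \<longrightarrow> dvd_in M (beta_mod b j) L"
    and Lcop: "\<forall>k\<in>C. i \<prec> k \<longrightarrow> k \<preceq> N \<longrightarrow> coprime_in M L (beta_mod b k)"
  shows "Z \<prec> L \<otimes> beta_mod b (i \<oplus> U)"
    "\<forall>j\<in>C. j \<preceq> i \<oplus> U \<longrightarrow> dvd_in M (beta_mod b j) (L \<otimes> beta_mod b (i \<oplus> U))"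
    "\<forall>k\<in>C. i \<oplus> U \<prec> k \<longrightarrow> k \<preceq> N \<longrightarrow> coprime_in M (L \<otimes> beta_mod b (i \<oplus> U)) (beta_mod b k)"
proof -
  let ?m = "beta_mod b (i \<oplus> U)"
  have m: "?m \<in> C" "Z \<prec> ?m" using beta_mod_pos[of b "i \<oplus> U"] C b0 by auto
  show "Z \<prec> L \<otimes> ?m" using mul_pos[of L ?m] m C L0 by simp
  show "\<forall>j\<in>C. j \<preceq> i \<oplus> U \<longrightarrow> dvd_in M (beta_mod b j) (L \<otimes> ?m)"
  proof (intro ballI impI)
    fix j assume j: "j \<in> C" "j \<preceq> i \<oplus> U"
    then have "j \<preceq> i \<or> j = i \<oplus> U" using le_iff[of j "i \<oplus> U"] le_succ_iff[of j i] C by auto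
    then show "dvd_in M (beta_mod b j) (L \<otimes> ?m)"
      using Ldv j dvd_mul[of "beta_mod b j" L ?m] dvd_mulL[of ?m L] C m by auto
  qed
  show "\<forall>k\<in>C. i \<oplus> U \<prec> k \<longrightarrow> k \<preceq> N \<longrightarrow> coprime_in M (L \<otimes> ?m) (beta_mod b k)"
  proof (intro ballI impI)
    fix k assume k: "k \<in> C" "i \<oplus> U \<prec> k" "k \<preceq> N"
    have ik: "i \<prec> k" using lt_trans[of i "i \<oplus> U" k] lt_succ[of i] k C by simp
    have "coprime_in M ?m (beta_mod b k)" using beta_mod_coprime[of b N "i \<oplus> U" k] C k b0 divs by simp
    then show "coprime_in M (L \<otimes> ?m) (beta_mod b k)" using coprime_mul[of L ?m "beta_mod b k"] Lcop ik k C m b0 by simp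
  qed
qed

lemma divides_all_upto_exists: assumes "N \<in> C" shows "\<exists>b\<in>C. Z \<prec> b \<and> divides_all_upto b N"
proof -
  let ?p = "Exf 1 (Conjf (Negf (Eqf (V 1) Zt)) (Allf 2 (Impf (Lef (V 2) (V 0)) (Impf (Negf (Eqf (V 2) Zt))
              (Exf 3 (Conjf (Lef (V 3) (V 1)) (Eqf (V 1) (Tt (V 2) (V 3)))))))))"
  let ?Q = "\<lambda>N. \<exists>b\<in>C. b \<noteq> Z \<and> (\<forall>t\<in>C. t \<preceq> N \<longrightarrow> t \<noteq> Z \<longrightarrow> (\<exists>q\<in>C. q \<preceq> b \<and> b = t \<otimes> q))"
  have d: "sigma1 ?p" by (auto intro!: sigma1.intros delta0.intros)
  have r: "range (\<lambda>_. Z) \<subseteq> C" by auto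
  have sat: "\<And>a. a \<in> C \<Longrightarrow> sat M ((\<lambda>_. Z)(0 := a)) ?p = ?Q a" by auto
  have "\<forall>t\<in>C. t \<preceq> Z \<longrightarrow> t = Z" using le_antisym[of _ Z] by auto
  then have base: "?Q Z" by (intro bexI[of _ U]) auto
  have step: "?Q (a \<oplus> U)" if a: "a \<in> C" "?Q a" for a
  proof -
    obtain b where b: "b \<in> C" "b \<noteq> Z" "\<forall>t\<in>C. t \<preceq> a \<longrightarrow> t \<noteq> Z \<longrightarrow> (\<exists>q\<in>C. q \<preceq> b \<and> b = t \<otimes> q)" using a by blast
    let ?b = "b \<otimes> (a \<oplus> U)"
    have bC: "?b \<in> C" using a b by simp
    have "Z \<prec> a \<oplus> U" using lt_succ[of a] Z_le[of a] le_lt_trans[of Z a "a \<oplus> U"] a by simp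
    then have "a \<oplus> U \<noteq> Z" by auto
    then have b0: "?b \<noteq> Z" using mul_eq_0[of b "a \<oplus> U"] a b by auto
    show ?thesis
    proof (rule bexI[of _ ?b], intro conjI ballI impI)
      fix t assume t: "t \<in> C" "t \<preceq> a \<oplus> U" "t \<noteq> Z"
      have "dvd_in M t ?b"
      proof (cases "t = a \<oplus> U")
        case True then show ?thesis using dvd_mulL[of t b] t b by simp
      next
        case False
        then have "t \<preceq> a" using t le_iff[of t "a \<oplus> U"] le_succ_iff[of t a] a by simp
        then obtain q where "q \<in> C" "b = t \<otimes> q" using b t by blast
        then show ?thesis using dvd_mul[of t b "a \<oplus> U"] dvd_mulR[of t q] t a b by simp
      qed
      then obtain q where q: "q \<in> C" "?b = t \<otimes> q" unfolding dvd_in_def by blast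
      then have "q \<noteq> Z" using b0 t by auto
      then have "q \<preceq> ?b" using le_mul[of q t] q t pos_iff mul_comm[of t q] by simp
      then show "\<exists>q\<in>C. q \<preceq> ?b \<and> ?b = t \<otimes> q" using q by blast
    qed (use bC b0 in auto)
  qed
  have "?Q N" by (rule sigma1_induct[OF d r sat base step assms])
  then obtain b where b: "b \<in> C" "b \<noteq> Z" "\<forall>t\<in>C. t \<preceq> N \<longrightarrow> t \<noteq> Z \<longrightarrow> (\<exists>q\<in>C. q \<preceq> b \<and> b = t \<otimes> q)" by blast
  have "divides_all_upto b N" unfolding divides_all_upto_def dvd_in_def using b pos_iff by blast
  then show ?thesis using b pos_iff by blast
qed

lemma divides_all_upto_exists_ge: assumes "N \<in> C" "D \<in> C" "Z \<prec> D" shows "\<exists>b\<in>C. Z \<prec> b \<and> D \<preceq> b \<and> divides_all_upto b N"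
proof -
  obtain b where b: "b \<in> C" "Z \<prec> b" "divides_all_upto b N" using divides_all_upto_exists assms by blast
  have "divides_all_upto (b \<otimes> D) N" using b assms dvd_mul unfolding divides_all_upto_def by blast
  moreover have "D \<preceq> b \<otimes> D" using le_mul[of D b] b assms mul_comm[of D b] by simp
  moreover have "Z \<prec> b \<otimes> D" using mul_pos b assms by blast
  ultimately show ?thesis using b assms by (intro bexI[of _ "b \<otimes> D"]) auto
qed

lemma lt_beta_mod: assumes "b \<in> C" "j \<in> C" shows "b \<prec> beta_mod b j"
proof -
  have "U \<preceq> j \<oplus> U" using le_add2[of U j] assms by simp
  then have "U \<otimes> b \<preceq> (j \<oplus> U) \<otimes> b" using mul_le_mono_r[of U "j \<oplus> U" b] assms by simp
  moreover have "(j \<oplus> U) \<otimes> b \<prec> U \<oplus> (j \<oplus> U) \<otimes> b" using lt_succ[of "(j \<oplus> U) \<otimes> b"] add_comm[of "(j \<oplus> U) \<otimes> b" U] assms by simp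
  ultimately show ?thesis unfolding beta_mod_def using assms le_lt_trans[of b "(j \<oplus> U) \<otimes> b"] by simp
qed

lemma beta_code_standard_length:
  assumes f: "\<And>j. j \<le> n \<Longrightarrow> f j \<in> C \<and> f j \<preceq> D" and D: "D \<in> C" "Z \<prec> D"
  shows "\<exists>a\<in>C. \<exists>b\<in>C. Z \<prec> b \<and> (\<forall>j\<le>n. rem a (beta_mod b (num M j)) = f j)"
proof -
  obtain b where b: "b \<in> C" "Z \<prec> b" "D \<preceq> b" "divides_all_upto b (num M n)"
    using divides_all_upto_exists_ge[of "num M n" D] D by auto
  have "\<exists>a\<in>C. \<exists>L\<in>C. Z \<prec> L \<and> (\<forall>j\<le>k. rem a (beta_mod b (num M j)) = f j) \<and>
     (\<forall>j\<in>C. j \<preceq> num M k \<longrightarrow> dvd_in M (beta_mod b j) L) \<and>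
     (\<forall>k'\<in>C. num M k \<prec> k' \<longrightarrow> k' \<preceq> num M n \<longrightarrow> coprime_in M L (beta_mod b k'))" if "k \<le> n" for k
    using that
  proof (induct k)
    case 0
    have m: "beta_mod b Z \<in> C" "U \<prec> beta_mod b Z" "Z \<prec> beta_mod b Z"
      using beta_mod_gt1[of b Z] beta_mod_pos[of b Z] b by auto
    have "f 0 \<preceq> b" using f[of 0] le_trans[of "f 0" D b] b D by simp
    then have f0: "f 0 \<prec> beta_mod b Z"
      using f[of 0] le_lt_trans[of "f 0" b "beta_mod b Z"] lt_beta_mod[of b Z] b by simp
    have "rem (f 0) (beta_mod b Z) = f 0" using rem_small[of "beta_mod b Z" "f 0"] m f[of 0] f0 by simp
    moreover have "\<forall>k'\<in>C. Z \<prec> k' \<longrightarrow> k' \<preceq> num M n \<longrightarrow> coprime_in M (beta_mod b Z) (beta_mod b k')"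
      using beta_mod_coprime[of b "num M n" Z] b by simp
    moreover have "\<forall>j\<in>C. j \<preceq> Z \<longrightarrow> dvd_in M (beta_mod b j) (beta_mod b Z)"
    proof (intro ballI impI)
      fix j assume "j \<in> C" "j \<preceq> Z"
      then have "j = Z" using le_antisym[of j Z] by simp
      then show "dvd_in M (beta_mod b j) (beta_mod b Z)" using m by simp
    qed
    ultimately show ?case using m f[of 0] by (intro bexI[of _ "f 0"] bexI[of _ "beta_mod b Z"]) auto
  next
    case (Suc k)
    then obtain a L where aL: "a \<in> C" "L \<in> C" "Z \<prec> L" "\<forall>j\<le>k. rem a (beta_mod b (num M j)) = f j"
      "\<forall>j\<in>C. j \<preceq> num M k \<longrightarrow> dvd_in M (beta_mod b j) L"
      "\<forall>k'\<in>C. num M k \<prec> k' \<longrightarrow> k' \<preceq> num M n \<longrightarrow> coprime_in M L (beta_mod b k')" by auto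
    have kn: "num M k \<prec> num M n" using Suc num_lt by simp
    have w: "f (Suc k) \<in> C" "f (Suc k) \<preceq> D" using f Suc(2) by auto
    then have wlt: "f (Suc k) \<prec> beta_mod b (num M k \<oplus> U)"
      using le_lt_trans[of "f (Suc k)" D "beta_mod b (num M k \<oplus> U)"] le_lt_trans[of D b "beta_mod b (num M k \<oplus> U)"]
        lt_beta_mod[of b "num M k \<oplus> U"] b D by simp
    obtain a' where a': "a' \<in> C" "\<forall>j\<in>C. j \<preceq> num M k \<longrightarrow> rem a' (beta_mod b j) = rem a (beta_mod b j)"
      "rem a' (beta_mod b (num M k \<oplus> U)) = f (Suc k)"
      using beta_code_extend[of b "num M n" "num M k" a L "f (Suc k)"] b aL kn w wlt by auto
    have "\<forall>j\<le>Suc k. rem a' (beta_mod b (num M j)) = f j"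
    proof (intro allI impI)
      fix j assume "j \<le> Suc k"
      then consider "j \<le> k" | "j = Suc k" by linarith
      then show "rem a' (beta_mod b (num M j)) = f j"
      proof cases
        case 1 then show ?thesis using a' aL num_le[of j k] by simp
      next
        case 2 then show ?thesis using a' num_Suc by simp
      qed
    qed
    then show ?case using beta_moduli_product_extend[of b "num M n" "num M k" L] b aL kn a' num_Suc[of k]
      by (intro bexI[of _ a'] bexI[of _ "L \<otimes> beta_mod b (num M k \<oplus> U)"]) auto
  qed
  then show ?thesis using b by blast
qed

definition dvd_bdd where "dvd_bdd x y \<longleftrightarrow> (\<exists>c\<in>C. c \<preceq> y \<and> y = x \<otimes> c)"
definition prime_bdd where "prime_bdd x \<longleftrightarrow> U \<prec> x \<and> (\<forall>c\<in>C. c \<preceq> x \<longrightarrow> dvd_bdd c x \<longrightarrow> c = U \<or> c = x)"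
definition coprime_bdd where "coprime_bdd x y \<longleftrightarrow> (\<forall>c\<in>C. c \<preceq> x \<longrightarrow> dvd_bdd c x \<longrightarrow> dvd_bdd c y \<longrightarrow> c = U)"
definition beta_bdd where "beta_bdd a b j w \<longleftrightarrow> w \<prec> beta_mod b j \<and> (\<exists>c\<in>C. c \<preceq> a \<and> a = c \<otimes> beta_mod b j \<oplus> w)"
lemma sat_dvd_fm[simp]: "q \<notin> tvars s \<Longrightarrow> q \<notin> tvars t \<Longrightarrow> sat M r (dvd_fm q s t) = dvd_bdd (ev M r s) (ev M r t)"
  unfolding dvd_fm_def dvd_bdd_def by simp
lemma sat_prime_fm[simp]: "d \<noteq> q \<Longrightarrow> d \<notin> tvars t \<Longrightarrow> q \<notin> tvars t \<Longrightarrow> sat M r (prime_fm d q t) = prime_bdd (ev M r t)"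
  unfolding prime_fm_def prime_bdd_def by (simp add: lt_def)

lemma sat_coprime_fm[simp]: "d \<noteq> q \<Longrightarrow> d \<notin> tvars s \<Longrightarrow> q \<notin> tvars s \<Longrightarrow> d \<notin> tvars t \<Longrightarrow> q \<notin> tvars t \<Longrightarrow>
    sat M r (coprime_fm d q s t) = coprime_bdd (ev M r s) (ev M r t)"
  unfolding coprime_fm_def coprime_bdd_def by auto

lemma sat_beta_fm[simp]: "q \<notin> tvars a \<Longrightarrow> q \<notin> tvars b \<Longrightarrow> q \<notin> tvars j \<Longrightarrow> q \<notin> tvars w \<Longrightarrow>
    sat M r (beta_fm q a b j w) = beta_bdd (ev M r a) (ev M r b) (ev M r j) (ev M r w)"
  unfolding beta_fm_def beta_bdd_def beta_mod_def by (simp add: lt_def)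

lemma dvd_bdd_iff[simp]: assumes "x \<in> C" "y \<in> C" shows "dvd_bdd x y = dvd_in M x y"
proof
  assume "dvd_bdd x y" then show "dvd_in M x y" unfolding dvd_bdd_def dvd_in_def by blast
next
  assume "dvd_in M x y"
  then obtain c where c: "c \<in> C" "y = x \<otimes> c" unfolding dvd_in_def by blast
  show "dvd_bdd x y"
  proof (cases "y = Z")
    case True then show ?thesis unfolding dvd_bdd_def using assms by (intro bexI[of _ Z]) auto
  next
    case False
    then have "x \<noteq> Z" "c \<noteq> Z" using c assms by auto
    then have "c \<preceq> y" using le_mul[of c x] c assms pos_iff[of x] mul_comm[of c x] by simp
    then show ?thesis unfolding dvd_bdd_def using c by blast
  qed
qed

lemma prime_bdd_iff[simp]: assumes "x \<in> C" shows "prime_bdd x = prime_in M x"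
proof -
  have "U \<prec> x \<Longrightarrow> x \<noteq> Z" using assms lt_asym[of Z x] lt_trans[of Z U x] by auto
  then show ?thesis unfolding prime_bdd_def prime_in_def using assms dvd_le[of _ x] by auto
qed

lemma coprime_bdd_iff[simp]: assumes "x \<in> C" "y \<in> C" "x \<noteq> Z" shows "coprime_bdd x y = coprime_in M x y"
  unfolding coprime_bdd_def coprime_in_def using assms dvd_le[of _ x] by auto

lemma rem_le[simp]: "m \<in> C \<Longrightarrow> Z \<prec> m \<Longrightarrow> a \<in> C \<Longrightarrow> rem a m \<preceq> a"
proof -
  assume a: "m \<in> C" "Z \<prec> m" "a \<in> C"
  obtain q r where qr: "q \<in> C" "r \<in> C" "a = q \<otimes> m \<oplus> r" "r \<prec> m" "rem a m = r" by (rule remE[OF a])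
  then show ?thesis using le_add2[of r "q \<otimes> m"] a by simp
qed

lemma beta_bdd_iff[simp]: assumes "a \<in> C" "b \<in> C" "j \<in> C" "w \<in> C" "Z \<prec> b"
  shows "beta_bdd a b j w = (w = rem a (beta_mod b j))"
proof -
  have m: "beta_mod b j \<in> C" "Z \<prec> beta_mod b j" using beta_mod_pos[of b j] assms by auto
  show ?thesis
  proof
    assume "beta_bdd a b j w"
    then obtain c where "c \<in> C" "a = c \<otimes> beta_mod b j \<oplus> w" "w \<prec> beta_mod b j" unfolding beta_bdd_def by blast
    then show "w = rem a (beta_mod b j)" using rem_unique(1)[of "beta_mod b j" c w a] m assms by simp
  next
    assume w: "w = rem a (beta_mod b j)"
    obtain q r where qr: "q \<in> C" "r \<in> C" "a = q \<otimes> beta_mod b j \<oplus> r" "r \<prec> beta_mod b j" "rem a (beta_mod b j) = r"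
      by (rule remE[of "beta_mod b j" a]) (use m assms in auto)
    have "q \<preceq> q \<otimes> beta_mod b j" using le_mul[of q "beta_mod b j"] qr m by simp
    moreover have "q \<otimes> beta_mod b j \<preceq> a" using qr le_add[of "q \<otimes> beta_mod b j" r] m by simp
    ultimately have "q \<preceq> a" using le_trans[of q "q \<otimes> beta_mod b j" a] qr m assms by simp
    then show "beta_bdd a b j w" unfolding beta_bdd_def using qr w by (intro conjI bexI[of _ q]) auto
  qed
qed

subsection \<open>Existence of radicals\<close>

definition rad_step where
  "rad_step N j w = (if prime_in M (j \<oplus> U) \<and> dvd_in M (j \<oplus> U) N then w \<otimes> (j \<oplus> U) else w)"
definition rad_approx where
  "rad_approx D j w \<longleftrightarrow> dvd_in M w D \<and> (\<forall>p\<in>C. prime_in M p \<and> dvd_in M p w \<longrightarrow> p \<preceq> j)"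

text \<open>
  \<open>(a, b)\<close> codes the partial radicals \<open>r\<^sub>0 = 1, \<dots>, r\<^sub>i\<close> of \<open>N\<close> (products of the primes \<open>\<le> j\<close>
  dividing \<open>N\<close>), each dividing \<open>D\<close>; \<open>L\<close> is a common multiple of the moduli used so far that is
  coprime to those still unused, which is what allows the code to be extended by Chinese remaindering.
\<close>
definition rad_code where "rad_code N D b i a L \<longleftrightarrow> rem a (beta_mod b Z) = U \<and>
   (\<forall>j\<in>C. j \<prec> i \<longrightarrow> rem a (beta_mod b (j \<oplus> U)) = rad_step N j (rem a (beta_mod b j))) \<and>
   (\<forall>j\<in>C. j \<preceq> i \<longrightarrow> rad_approx D j (rem a (beta_mod b j))) \<and> Z \<prec> L \<and>
   (\<forall>j\<in>C. j \<preceq> i \<longrightarrow> dvd_in M (beta_mod b j) L) \<and>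
   (\<forall>k\<in>C. i \<prec> k \<longrightarrow> k \<preceq> N \<longrightarrow> coprime_in M L (beta_mod b k))"

text \<open>The same with all quantifiers bounded: the meaning of the formula \<open>rad_code_fm\<close> below.\<close>
definition rad_code_bdd where "rad_code_bdd N D b i a L \<longleftrightarrow> U = rem a (beta_mod b Z) \<and>
   (\<forall>j\<in>C. j \<preceq> i \<longrightarrow> j \<noteq> i \<longrightarrow>
      (prime_in M (j \<oplus> U) \<and> dvd_in M (j \<oplus> U) N \<longrightarrow> rem a (beta_mod b j) \<otimes> (j \<oplus> U) = rem a (beta_mod b (j \<oplus> U))) \<and>
      (\<not> (prime_in M (j \<oplus> U) \<and> dvd_in M (j \<oplus> U) N) \<longrightarrow> rem a (beta_mod b j) = rem a (beta_mod b (j \<oplus> U)))) \<and>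
   (\<forall>j\<in>C. j \<preceq> i \<longrightarrow> dvd_in M (rem a (beta_mod b j)) D \<and>
       (\<forall>p\<in>C. p \<preceq> rem a (beta_mod b j) \<longrightarrow> prime_in M p \<and> dvd_in M p (rem a (beta_mod b j)) \<longrightarrow> p \<preceq> j)) \<and> Z \<noteq> L \<and>
   (\<forall>j\<in>C. j \<preceq> i \<longrightarrow> dvd_in M (beta_mod b j) L) \<and>
   (\<forall>k\<in>C. k \<preceq> N \<longrightarrow> i \<prec> k \<longrightarrow> coprime_bdd L (beta_mod b k))"

lemma rad_code_bdd_iff:
  assumes C: "N \<in> C" "D \<in> C" "b \<in> C" "i \<in> C" "a \<in> C" "L \<in> C" and b0: "Z \<prec> b" and D0: "D \<noteq> Z"
  shows "rad_code_bdd N D b i a L = rad_code N D b i a L"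
proof -
  have moduli: "\<And>j. j \<in> C \<Longrightarrow> beta_mod b j \<in> C \<and> Z \<prec> beta_mod b j" using beta_mod_pos C b0 by auto
  have 1: "(dvd_in M w D \<and> (\<forall>p\<in>C. p \<preceq> w \<longrightarrow> prime_in M p \<and> dvd_in M p w \<longrightarrow> p \<preceq> j)) =
         rad_approx D j w" if "w \<in> C" for w j
  proof -
    have "dvd_in M w D \<Longrightarrow> w \<noteq> Z" using dvd_0_iff[of D] D0 C by auto
    then show ?thesis unfolding rad_approx_def using dvd_le[of _ w] that by auto
  qed
  have 2: "Z \<noteq> L \<Longrightarrow> coprime_bdd L (beta_mod b k) = coprime_in M L (beta_mod b k)" if "k \<in> C" for k
    using coprime_bdd_iff[of L "beta_mod b k"] C moduli that by auto
  show ?thesis unfolding rad_code_bdd_def rad_code_def rad_step_def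
    using 1 2 C moduli pos_iff[of L] by (auto simp: lt_def simp del: coprime_bdd_iff)
qed

text \<open>Variables: 0 = \<open>i\<close>, 1 = \<open>N\<close>, 2 = \<open>D\<close>, 3 = \<open>b\<close>, 4 = \<open>a\<close>, 5 = \<open>L\<close>; the others are bound.\<close>
abbreviation "rad_code_body_fm \<equiv> Conjf (beta_fm 8 (V 4) (V 3) Zt Ot)
  (Conjf (Allf 6 (Impf (Lef (V 6) (V 0)) (Impf (Negf (Eqf (V 6) (V 0))) (Allf 7 (Impf (Lef (V 7) (V 4))
     (Impf (beta_fm 8 (V 4) (V 3) (V 6) (V 7))
       (Conjf (Impf (Conjf (prime_fm 10 8 (Pt (V 6) Ot)) (dvd_fm 8 (Pt (V 6) Ot) (V 1)))
                    (beta_fm 8 (V 4) (V 3) (Pt (V 6) Ot) (Tt (V 7) (Pt (V 6) Ot))))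
              (Impf (Negf (Conjf (prime_fm 10 8 (Pt (V 6) Ot)) (dvd_fm 8 (Pt (V 6) Ot) (V 1))))
                    (beta_fm 8 (V 4) (V 3) (Pt (V 6) Ot) (V 7))))))))))
  (Conjf (Allf 6 (Impf (Lef (V 6) (V 0)) (Allf 7 (Impf (Lef (V 7) (V 4)) (Impf (beta_fm 8 (V 4) (V 3) (V 6) (V 7))
       (Conjf (dvd_fm 8 (V 7) (V 2)) (Allf 9 (Impf (Lef (V 9) (V 7))
          (Impf (Conjf (prime_fm 10 8 (V 9)) (dvd_fm 8 (V 9) (V 7))) (Lef (V 9) (V 6)))))))))))
  (Conjf (Conjf (Lef Zt (V 5)) (Negf (Eqf Zt (V 5))))
  (Conjf (Allf 6 (Impf (Lef (V 6) (V 0)) (dvd_fm 8 (Pt Ot (Tt (Pt (V 6) Ot) (V 3))) (V 5))))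
         (Allf 11 (Impf (Lef (V 11) (V 1)) (Impf (Conjf (Lef (V 0) (V 11)) (Negf (Eqf (V 0) (V 11))))
             (coprime_fm 10 8 (V 5) (Pt Ot (Tt (Pt (V 11) Ot) (V 3)))))))))))"

abbreviation "rad_code_fm \<equiv> Exf 4 (Exf 5 (Impf (Lef (V 0) (V 1)) rad_code_body_fm))"
lemma sigma1_rad_code_fm: "sigma1 rad_code_fm"
  by (intro sigma1.intros delta0.intros) (auto intro!: delta0.intros)

lemma sat_rad_code_fm:
  assumes C: "N \<in> C" "D \<in> C" "b \<in> C" "i \<in> C" and b0: "Z \<prec> b" and D0: "D \<noteq> Z"
  shows "sat M (((\<lambda>_. Z)(1 := N, 2 := D, 3 := b))(0 := i)) rad_code_fm \<longleftrightarrow>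
     (\<exists>a\<in>C. \<exists>L\<in>C. i \<preceq> N \<longrightarrow> rad_code_bdd N D b i a L)"
proof -
  have moduli: "\<And>j. j \<in> C \<Longrightarrow> beta_mod b j \<in> C \<and> Z \<prec> beta_mod b j" using beta_mod_pos C b0 by auto
  show ?thesis
    using C b0 moduli
    by (simp add: rad_code_bdd_def lt_def[symmetric] beta_mod_def[symmetric])
qed

lemma rad_approx_step:
  assumes C: "D \<in> C" "N \<in> C" "i \<in> C" "u \<in> C" and D0: "D \<noteq> Z"
    and H: "\<forall>p\<in>C. prime_in M p \<and> dvd_in M p N \<longrightarrow> dvd_in M p D"
    and inv: "rad_approx D i u"
  shows "rad_approx D (i \<oplus> U) (rad_step N i u)"
proof (cases "prime_in M (i \<oplus> U) \<and> dvd_in M (i \<oplus> U) N")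
  case False
  have "i \<preceq> i \<oplus> U" using le_add[of i U] C by simp
  then show ?thesis using False inv C le_trans[of _ i "i \<oplus> U"] unfolding rad_approx_def rad_step_def by auto
next
  case True
  let ?p = "i \<oplus> U"
  have pC: "?p \<in> C" using C by simp
  have pD: "dvd_in M ?p D" using H True pC by blast
  have npu: "\<not> dvd_in M ?p u"
  proof
    assume "dvd_in M ?p u"
    then have "?p \<preceq> i" using inv True pC unfolding rad_approx_def by blast
    then show False using lt_succ[of i] not_le[of ?p i] C by simp
  qed
  obtain h where h: "h \<in> C" "D = u \<otimes> h" using inv unfolding rad_approx_def dvd_in_def by blast
  have "dvd_in M ?p h" using prime_in_dvd_mult[of ?p u h] True pC C h pD npu by simp
  then obtain h' where h': "h' \<in> C" "h = ?p \<otimes> h'" unfolding dvd_in_def by blast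
  have "D = (u \<otimes> ?p) \<otimes> h'" using h h' C mul_assoc[of u ?p h'] by simp
  then have 1: "dvd_in M (u \<otimes> ?p) D" unfolding dvd_in_def using h' by blast
  have 2: "p \<preceq> ?p" if p: "p \<in> C" "prime_in M p" "dvd_in M p (u \<otimes> ?p)" for p
  proof (cases "dvd_in M p u")
    case True
    then have "p \<preceq> i" using inv p unfolding rad_approx_def by blast
    then show ?thesis using le_trans[of p i ?p] le_add[of i U] p C by simp
  next
    case False
    then have "dvd_in M p ?p" using prime_in_dvd_mult[of p u ?p] p C by simp
    moreover have "?p \<noteq> Z" using lt_succ[of i] Z_le[of i] le_lt_trans[of Z i ?p] C by auto
    ultimately show ?thesis using dvd_le[of p ?p] p C by simp
  qed
  show ?thesis using True 1 2 unfolding rad_approx_def rad_step_def by auto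
qed

lemma rad_code_base:
  assumes C: "N \<in> C" "D \<in> C" "b \<in> C" and b0: "Z \<prec> b" and b: "divides_all_upto b N"
  shows "rad_code N D b Z U (beta_mod b Z)"
proof -
  have m: "beta_mod b Z \<in> C" "U \<prec> beta_mod b Z" "Z \<prec> beta_mod b Z"
    using beta_mod_gt1[of b Z] beta_mod_pos[of b Z] C b0 by auto
  have u: "rem U (beta_mod b Z) = U" using rem_small[of "beta_mod b Z" U] m by simp
  have "rad_approx D Z U" unfolding rad_approx_def using C dvd_U prime_in_gt_one by fastforce
  then have "\<forall>j\<in>C. j \<preceq> Z \<longrightarrow> rad_approx D j (rem U (beta_mod b j)) \<and> dvd_in M (beta_mod b j) (beta_mod b Z)"
    using le_antisym[of _ Z] u m by fastforce
  moreover have "\<forall>k\<in>C. Z \<prec> k \<longrightarrow> k \<preceq> N \<longrightarrow> coprime_in M (beta_mod b Z) (beta_mod b k)"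
    using beta_mod_coprime[of b N Z] C b0 b by simp
  ultimately show ?thesis unfolding rad_code_def using u m not_lt[of _ Z] by auto
qed

lemma rad_code_step:
  assumes C: "N \<in> C" "D \<in> C" "b \<in> C" "i \<in> C" "a \<in> C" "L \<in> C" and b0: "Z \<prec> b" and b: "divides_all_upto b N"
    and D0: "D \<noteq> Z" and Db: "D \<preceq> b" and iN: "i \<prec> N"
    and H: "\<forall>p\<in>C. prime_in M p \<and> dvd_in M p N \<longrightarrow> dvd_in M p D"
    and rc: "rad_code N D b i a L"
  shows "\<exists>a'\<in>C. \<exists>L'\<in>C. rad_code N D b (i \<oplus> U) a' L'"
proof -
  define w where "w = rad_step N i (rem a (beta_mod b i))"
  have wC: "w \<in> C" using C b0 beta_mod_pos unfolding w_def rad_step_def by simp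
  have w_approx: "rad_approx D (i \<oplus> U) w"
    unfolding w_def using rad_approx_step[OF C(2,1,4) _ D0 H] rc C b0 beta_mod_pos unfolding rad_code_def by simp
  then have "w \<noteq> Z" "dvd_in M w D" using dvd_0_iff[of D] D0 C unfolding rad_approx_def by auto
  then have "w \<preceq> b" using dvd_le[of w D] le_trans[of w D b] wC C D0 Db by simp
  then have wlt: "w \<prec> beta_mod b (i \<oplus> U)"
    using le_lt_trans[of w b "beta_mod b (i \<oplus> U)"] lt_beta_mod[of b "i \<oplus> U"] wC C by simp
  have L: "Z \<prec> L" "\<forall>j\<in>C. j \<preceq> i \<longrightarrow> dvd_in M (beta_mod b j) L"
    "\<forall>k\<in>C. i \<prec> k \<longrightarrow> k \<preceq> N \<longrightarrow> coprime_in M L (beta_mod b k)"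
    using rc unfolding rad_code_def by auto
  obtain a' where a': "a' \<in> C" "\<forall>j\<in>C. j \<preceq> i \<longrightarrow> rem a' (beta_mod b j) = rem a (beta_mod b j)"
    "rem a' (beta_mod b (i \<oplus> U)) = w"
    using beta_code_extend[OF C(3,1,4,5,6) wC b0 iN L(2,3) wlt] by blast
  have below_succ: "j \<preceq> i \<or> j = i \<oplus> U" if "j \<in> C" "j \<preceq> i \<oplus> U" for j
    using le_iff[of j "i \<oplus> U"] le_succ_iff[of j i] that C by auto
  have "\<forall>j\<in>C. j \<prec> i \<oplus> U \<longrightarrow> rem a' (beta_mod b (j \<oplus> U)) = rad_step N j (rem a' (beta_mod b j))"
  proof (intro ballI impI)
    fix j assume j: "j \<in> C" "j \<prec> i \<oplus> U"
    then have "j \<prec> i \<or> j = i" using le_succ_iff[of j i] le_iff[of j i] C by auto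
    then show "rem a' (beta_mod b (j \<oplus> U)) = rad_step N j (rem a' (beta_mod b j))"
    proof
      assume "j \<prec> i"
      then have "j \<oplus> U \<preceq> i" "j \<preceq> i" using lt_succ_le[of j i] lt_imp_le j C by auto
      then show ?thesis using rc a' j C unfolding rad_code_def by (simp add: \<open>j \<prec> i\<close>)
    qed (use a' C w_def in simp)
  qed
  moreover have "\<forall>j\<in>C. j \<preceq> i \<oplus> U \<longrightarrow> rad_approx D j (rem a' (beta_mod b j))"
  proof (intro ballI impI)
    fix j assume "j \<in> C" "j \<preceq> i \<oplus> U"
    then consider "j \<preceq> i" | "j = i \<oplus> U" using below_succ by blast
    then show "rad_approx D j (rem a' (beta_mod b j))"
      by cases (use a' rc w_approx \<open>j \<in> C\<close> in \<open>auto simp: rad_code_def\<close>)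
  qed
  ultimately have "rad_code N D b (i \<oplus> U) a' (L \<otimes> beta_mod b (i \<oplus> U))"
    using beta_moduli_product_extend[OF C(3,1,4,6) b0 iN b L] a' rc C unfolding rad_code_def by auto
  moreover have "L \<otimes> beta_mod b (i \<oplus> U) \<in> C" using C b0 beta_mod_pos by simp
  ultimately show ?thesis using a'(1) by blast
qed

lemma rad_in_exists_dvd:
  assumes C: "N \<in> C" "D \<in> C" and D0: "D \<noteq> Z"
    and H: "\<forall>p\<in>C. prime_in M p \<and> dvd_in M p N \<longrightarrow> dvd_in M p D"
  shows "\<exists>r\<in>C. rad_in M N r \<and> dvd_in M r D"
proof -
  have "Z \<prec> D" using D0 pos_iff C by blast
  then obtain b where b: "b \<in> C" "Z \<prec> b" "D \<preceq> b" "divides_all_upto b N" using divides_all_upto_exists_ge[of N D] C by blast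
  let ?r = "(\<lambda>_. Z)(1 := N, 2 := D, 3 := b)"
  let ?Q = "\<lambda>i. \<exists>a\<in>C. \<exists>L\<in>C. i \<preceq> N \<longrightarrow> rad_code_bdd N D b i a L"
  have rr: "range ?r \<subseteq> C" using C b by auto
  have sat: "\<And>i. i \<in> C \<Longrightarrow> sat M (?r(0 := i)) rad_code_fm = ?Q i" using sat_rad_code_fm C b D0 by blast
  have "rad_code N D b Z U (beta_mod b Z)" using rad_code_base[of N D b] C b by simp
  then have "rad_code_bdd N D b Z U (beta_mod b Z)" using rad_code_bdd_iff[of N D b Z U "beta_mod b Z"] C b D0 by simp
  then have base: "?Q Z" using C b by (intro bexI[of _ U] bexI[of _ "beta_mod b Z"]) auto
  have step: "?Q (i \<oplus> U)" if i: "i \<in> C" "?Q i" for i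
  proof (cases "i \<oplus> U \<preceq> N")
    case True
    then have iN: "i \<prec> N" using lt_succ_le[of i N] i C by simp
    then have "i \<preceq> N" using lt_imp_le by blast
    then obtain a L where aL: "a \<in> C" "L \<in> C" "rad_code_bdd N D b i a L" using i by blast
    then have "rad_code N D b i a L" using rad_code_bdd_iff C b D0 i by blast
    then obtain a' L' where a'L': "a' \<in> C" "L' \<in> C" "rad_code N D b (i \<oplus> U) a' L'"
      using rad_code_step[of N D b i a L] C b D0 iN H aL i by blast
    then have "rad_code_bdd N D b (i \<oplus> U) a' L'" using rad_code_bdd_iff[of N D b "i \<oplus> U" a' L'] C b D0 i by simp
    then show ?thesis using a'L' by blast
  next
    case False then show ?thesis by (intro bexI[of _ Z]) auto
  qed
  have "?Q N" by (rule sigma1_induct[OF sigma1_rad_code_fm rr sat base step C(1)])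
  then obtain a L where aL: "a \<in> C" "L \<in> C" "rad_code_bdd N D b N a L" using C by auto
  then have rc: "rad_code N D b N a L" using rad_code_bdd_iff C b D0 by blast
  have moduli: "\<And>j. j \<in> C \<Longrightarrow> beta_mod b j \<in> C \<and> Z \<prec> beta_mod b j" using beta_mod_pos C b by auto
  let ?res = "rem a (beta_mod b N)"
  have resC: "?res \<in> C" using moduli C aL by simp
  have u0: "rem a (beta_mod b Z) = U" using rc unfolding rad_code_def by blast
  have b1: "beta_in M a b Z U" by (rule beta_iff[of a b Z U, THEN iffD2]) (use aL b u0 moduli[of Z] in auto)
  have b3: "beta_in M a b N ?res" using beta_iff[of a b N ?res] aL b C resC by simp
  have b2: "\<forall>i\<in>C. i \<prec> N \<longrightarrow> (\<forall>u\<in>C. beta_in M a b i u \<longrightarrow> beta_in M a b (i \<oplus> U) (rad_step N i u))"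
  proof (intro ballI impI)
    fix i u assume iu: "i \<in> C" "i \<prec> N" "u \<in> C" "beta_in M a b i u"
    then have "u = rem a (beta_mod b i)" using beta_iff[of a b i u] aL b by simp
    then show "beta_in M a b (i \<oplus> U) (rad_step N i u)"
      using rc beta_iff[of a b "i \<oplus> U"] aL b iu moduli unfolding rad_code_def rad_step_def by auto
  qed
  have "rad_in M N ?res" unfolding rad_in_def rad_step_def[symmetric] using b1 b2 b3 aL b by blast
  moreover have "dvd_in M ?res D" using rc C unfolding rad_code_def rad_approx_def by simp
  ultimately show ?thesis using resC by blast
qed

lemma npow_carrier[simp]: "x \<in> C \<Longrightarrow> npow M x k \<in> C" by (induct k) auto

lemma npow_ge1: "x \<in> C \<Longrightarrow> U \<preceq> x \<Longrightarrow> U \<preceq> npow M x k"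
proof (induct k)
  case (Suc k)
  then show ?case using mul_le_mono[of U "npow M x k" U x] by simp
qed simp

lemma npow_mono: "x \<in> C \<Longrightarrow> U \<preceq> x \<Longrightarrow> j \<le> k \<Longrightarrow> npow M x j \<preceq> npow M x k"
proof (induct k)
  case 0 then show ?case by simp
next
  case (Suc k)
  have "npow M x k \<preceq> npow M x (Suc k)" using mul_le_mono_l[of U x "npow M x k"] Suc by simp
  then show ?case using Suc le_trans[of "npow M x j" "npow M x k" "npow M x (Suc k)"]
    by (cases "j = Suc k") auto
qed

lemma npow_add: "x \<in> C \<Longrightarrow> npow M x (m + n) = npow M x m \<otimes> npow M x n"
  by (induct n) (auto simp: mul_assoc)
lemma npow_mult: "x \<in> C \<Longrightarrow> npow M x (m * n) = npow M (npow M x m) n"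
  by (induct n) (auto simp: npow_add mul_comm)

lemma npow_mul_base: "x \<in> C \<Longrightarrow> y \<in> C \<Longrightarrow> npow M (x \<otimes> y) n = npow M x n \<otimes> npow M y n"
proof (induct n)
  case (Suc n)
  then show ?case using mul_assoc[of "npow M x n" "npow M y n" "x \<otimes> y"] mul_left_comm[of "npow M y n" x y]
    mul_assoc[of "npow M x n" x "npow M y n \<otimes> y"] mul_assoc[of "npow M x n" "npow M y n" "x \<otimes> y"] by simp
qed simp

lemma npow_mono_base: "x \<in> C \<Longrightarrow> y \<in> C \<Longrightarrow> x \<preceq> y \<Longrightarrow> npow M x n \<preceq> npow M y n"
  by (induct n) (auto intro: mul_le_mono)
lemma npow_nz: "x \<in> C \<Longrightarrow> x \<noteq> Z \<Longrightarrow> npow M x n \<noteq> Z"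
  by (induct n) (auto simp: mul_eq_0)

lemma npow_strict: assumes "x \<in> C" "y \<in> C" "x \<prec> y" shows "npow M x (Suc n) \<prec> npow M y (Suc n)"
proof (induct n)
  case 0 then show ?case using assms by simp
next
  case (Suc n)
  have y0: "Z \<prec> y" using assms Z_le[of x] le_lt_trans[of Z x y] by simp
  have 1: "npow M x (Suc n) \<otimes> x \<preceq> npow M x (Suc n) \<otimes> y" using mul_le_mono_l[of x y "npow M x (Suc n)"] assms lt_imp_le by simp
  have 2: "npow M x (Suc n) \<otimes> y \<prec> npow M y (Suc n) \<otimes> y" using mul_lt_mono[OF _ _ _ y0 Suc] assms by simp
  show ?case using le_lt_trans[OF _ _ _ 1 2] assms by simp
qed

lemma npow_2: "z \<in> C \<Longrightarrow> npow M z 2 = z \<otimes> z" by (simp add: numeral_2_eq_2)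
lemma npow_3: "z \<in> C \<Longrightarrow> npow M z 3 = z \<otimes> z \<otimes> z" by (simp add: numeral_3_eq_3)
lemma npow_4: "z \<in> C \<Longrightarrow> npow M z 4 = (z \<otimes> z) \<otimes> (z \<otimes> z)"
  using npow_mult[of z 2 2] npow_2[of z] npow_2[of "z \<otimes> z"] by simp
lemma npow_one[simp]: "npow M U n = U" by (induct n) auto
lemma num_npow: "npow M (num M m) n = num M (m ^ n)"
  by (induct n) (auto simp: num_mul mul_comm)

lemma pow_in_npow:
  assumes x: "x \<in> C" "U \<preceq> x"
  shows "pow_in M x (num M n) (npow M x n)"
proof -
  have D: "npow M x n \<in> C" "Z \<prec> npow M x n"
    using npow_ge1[OF x, of n] lt_le_trans[of Z U "npow M x n"] x by auto
  have "npow M x j \<in> C \<and> npow M x j \<preceq> npow M x n" if "j \<le> n" for j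
    using npow_mono[OF x that] x by simp
  then obtain a b where ab: "a \<in> C" "b \<in> C" "Z \<prec> b" "\<forall>j\<le>n. rem a (beta_mod b (num M j)) = npow M x j"
    using beta_code_standard_length[OF _ D] by blast
  have beta: "beta_in M a b (num M j) u \<longleftrightarrow> u = npow M x j" if "j \<le> n" "u \<in> C" for j u
    using beta_iff[of a b "num M j" u] ab that by simp
  show ?thesis unfolding pow_in_def
  proof (rule bexI[of _ a], rule bexI[of _ b], intro conjI ballI impI)
    show "beta_in M a b Z U" using beta[of 0 U] by simp
    show "beta_in M a b (num M n) (npow M x n)" using beta[of n] D by simp
    fix i u assume i: "i \<in> C" "i \<prec> num M n" and u: "u \<in> C" "beta_in M a b i u"
    obtain j where "j < n" "i = num M j" using below_num i by blast
    then show "beta_in M a b (i \<oplus> U) (u \<otimes> x)"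
      using beta[of j u] beta[of "Suc j" "u \<otimes> x"] u x num_Suc by simp
  qed (use ab in auto)
qed

lemma prime_dvd_npow: assumes "p \<in> C" "prime_in M p" "z \<in> C" "dvd_in M p (npow M z k)" shows "dvd_in M p z"
  using assms(4)
proof (induct k)
  case 0 then show ?case using dvd_U[of p] assms prime_in_gt_one by fastforce
next
  case (Suc k)
  then show ?case using prime_in_dvd_mult[of p "npow M z k" z] assms by auto
qed

lemma prime_dvd_npow_mult:
  assumes p: "p \<in> C" "prime_in M p" and X: "X \<in> C" "x \<in> C" and dvd: "dvd_in M p (npow M X n \<otimes> npow M x k)"
  shows "dvd_in M p (X \<otimes> x)"
proof -
  have "dvd_in M p (npow M X n) \<or> dvd_in M p (npow M x k)"
    using prime_in_dvd_mult[of p "npow M X n" "npow M x k"] p X dvd by auto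
  then have "dvd_in M p X \<or> dvd_in M p x" using prime_dvd_npow p X by blast
  then show ?thesis using dvd_mul[of p X x] dvd_mul2[of p x X] p X by auto
qed

lemma npow_strict3: "x \<in> C \<Longrightarrow> y \<in> C \<Longrightarrow> x \<prec> y \<Longrightarrow> npow M x 3 \<prec> npow M y 3"
  using npow_strict[of x y 2] by (simp add: numeral_3_eq_3)

lemma prime_dvd_power_products:
  assumes C: "X \<in> C" "x \<in> C" "Y \<in> C" "y \<in> C" and p: "p \<in> C" "prime_in M p"
    and dvd: "dvd_in M p ((npow M Y n \<otimes> npow M y j \<otimes> U) \<otimes> (npow M X m \<otimes> npow M x i))"
  shows "dvd_in M p ((X \<otimes> x) \<otimes> (Y \<otimes> y))"
proof -
  have dvd': "dvd_in M p ((npow M Y n \<otimes> npow M y j) \<otimes> (npow M X m \<otimes> npow M x i))" using dvd C by simp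
  have "dvd_in M p (npow M Y n \<otimes> npow M y j) \<or> dvd_in M p (npow M X m \<otimes> npow M x i)"
    using prime_in_dvd_mult[OF p(2,1) _ _ dvd'] C by (cases "dvd_in M p (npow M Y n \<otimes> npow M y j)") simp_all
  then have "dvd_in M p (Y \<otimes> y) \<or> dvd_in M p (X \<otimes> x)"
    using prime_dvd_npow_mult[of p Y y] prime_dvd_npow_mult[of p X x] C p by blast
  then show ?thesis
    using dvd_mul[of p "X \<otimes> x" "Y \<otimes> y"] dvd_mul2[of p "Y \<otimes> y" "X \<otimes> x"] C p by auto
qed

lemma lt_of_npow_Suc_lt:
  assumes u: "u \<in> C" "Z \<prec> u" and k: "k \<in> C" "w \<in> C"
    and lt: "npow M u (Suc n) \<prec> k \<otimes> w" and le: "w \<preceq> npow M u n"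
  shows "u \<prec> k"
proof -
  have "k \<otimes> w \<preceq> k \<otimes> npow M u n" using mul_le_mono_l le u k by simp
  then have "u \<otimes> npow M u n \<prec> k \<otimes> npow M u n"
    using lt lt_le_trans[of "npow M u (Suc n)" "k \<otimes> w"] mul_comm[of "npow M u n" u] u k by simp
  moreover have "Z \<prec> npow M u n" using npow_nz[of u n] u pos_iff by simp
  ultimately show ?thesis using mul_lt_mono_iff u k by simp
qed

lemma abc_consecutive:
  assumes abc: "abc_in M K" and v: "v \<in> C" "v \<noteq> Z" and D: "D \<in> C" "D \<noteq> Z"
    and H: "\<forall>p\<in>C. prime_in M p \<and> dvd_in M p ((v \<otimes> U) \<otimes> (v \<oplus> U)) \<longrightarrow> dvd_in M p D"
  shows "npow M (v \<oplus> U) 9 \<prec> npow M (num M K) 9 \<otimes> npow M D 12"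
proof -
  define u where "u = v \<oplus> U"
  have uC: "u \<in> C" unfolding u_def using v by simp
  obtain r where r: "r \<in> C" "rad_in M ((v \<otimes> U) \<otimes> u) r" "dvd_in M r D"
    using rad_in_exists_dvd[OF _ D H] v unfolding u_def by auto
  have rD: "r \<preceq> D" using dvd_le[of r D] r D by simp
  have cop: "coprime_in M v u" unfolding coprime_in_def
  proof (intro ballI impI)
    fix d assume d: "d \<in> C" "dvd_in M d v \<and> dvd_in M d u"
    then have "dvd_in M d U" using dvd_sub[of d v U] v unfolding u_def by simp
    then show "d = U" using dvd_U d by blast
  qed
  have abc': "\<forall>a\<in>C. \<forall>b\<in>C. \<forall>c\<in>C. \<forall>r\<in>C.
       Z \<prec> a \<and> Z \<prec> b \<and> coprime_in M a b \<and> coprime_in M b c \<and> coprime_in M a c \<and>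
       a \<oplus> b = c \<and> rad_in M ((a \<otimes> b) \<otimes> c) r \<longrightarrow>
       (c \<otimes> c) \<otimes> c \<prec> ((num M K \<otimes> num M K) \<otimes> num M K) \<otimes> ((r \<otimes> r) \<otimes> (r \<otimes> r))"
    using abc unfolding abc_in_def Let_def .
  have "Z \<prec> v \<and> Z \<prec> U \<and> coprime_in M v U \<and> coprime_in M U u \<and> coprime_in M v u \<and>
      v \<oplus> U = u \<and> rad_in M ((v \<otimes> U) \<otimes> u) r"
    using v pos_iff[of v] coprime_U cop dvd_U r unfolding coprime_in_def u_def by auto
  then have "u \<otimes> u \<otimes> u \<prec> (num M K \<otimes> num M K \<otimes> num M K) \<otimes> (r \<otimes> r \<otimes> (r \<otimes> r))"
    using abc'[rule_format, OF v(1) one_carrier uC r(1)] by blast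
  then have "npow M u 3 \<prec> npow M (num M K) 3 \<otimes> npow M r 4" using npow_3 npow_4 uC r by simp
  moreover have "npow M (num M K) 3 \<otimes> npow M r 4 \<preceq> npow M (num M K) 3 \<otimes> npow M D 4"
    using mul_le_mono_l npow_mono_base[of r D 4] r D rD by simp
  ultimately have "npow M u 3 \<prec> npow M (num M K) 3 \<otimes> npow M D 4"
    using lt_le_trans[of "npow M u 3" "npow M (num M K) 3 \<otimes> npow M r 4"] uC r D by simp
  then have "npow M (npow M u 3) 3 \<prec> npow M (npow M (num M K) 3 \<otimes> npow M D 4) 3"
    using npow_strict3 uC D by simp
  then show ?thesis
    using npow_mult[of u 3 3] npow_mul_base[of "npow M (num M K) 3" "npow M D 4" 3]
      npow_mult[of "num M K" 3 3] npow_mult[of D 4 3] uC D unfolding u_def by simp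
qed

end

section \<open>The exponential \<open>e\<close> of a model of \<open>Exp'\<close>\<close>

locale exp_prime_model = isigma1_model +
  fixes A e
  assumes exp_prime_e: "exp_prime M A e"
begin

lemma presburger_axioms:
    "A \<subseteq> C" "Z \<in> A" "U \<in> A"
    "\<forall>x\<in>A. \<forall>y\<in>A. x \<oplus> y \<in> A \<and> x \<otimes> y \<in> A"
    "\<forall>z\<in>A. Z \<noteq> z \<oplus> U"
    "\<forall>x\<in>A. x \<noteq> Z \<longrightarrow> (\<exists>z\<in>A. x = z \<oplus> U)"
    "\<forall>x\<in>A. \<forall>y\<in>A. \<forall>z\<in>A. x \<oplus> z = y \<oplus> z \<longrightarrow> x = y"
    "\<forall>x\<in>A. x \<oplus> Z = x"
    "\<forall>x\<in>A. \<forall>y\<in>A. \<forall>z\<in>A. x \<oplus> (y \<oplus> z) = x \<oplus> y \<oplus> z"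
    "\<forall>x\<in>A. \<forall>y\<in>A. x \<oplus> y = y \<oplus> x"
    "\<forall>x\<in>A. \<forall>y\<in>A. x \<preceq> y \<longleftrightarrow> (\<exists>z\<in>A. x \<oplus> z = y)"
    "\<forall>n::nat. 0 < n \<longrightarrow> (\<forall>x\<in>A. \<exists>y\<in>A. nsm M n y \<preceq> x \<and> x \<prec> nsm M n (y \<oplus> U))"
  using exp_prime_e unfolding exp_prime_def presburger_sub_def by - (elim conjE, assumption)+

lemma exp_axioms:
    "\<forall>x\<in>C. \<forall>y\<in>A. e x y \<in> C"
    "\<forall>x\<in>C. \<forall>y\<in>A. (x = U \<or> y = Z) \<longleftrightarrow> e x y = U"
    "\<forall>x\<in>C. \<forall>y\<in>A. x \<noteq> Z \<longrightarrow> e x y \<noteq> Z"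
    "\<forall>x\<in>C. e x U = x"
    "\<forall>x\<in>C. \<forall>y\<in>A. \<forall>z\<in>A. e x (y \<oplus> z) = e x y \<otimes> e x z"
  using exp_prime_e unfolding exp_prime_def by - (elim conjE, assumption)+

lemma A_subset: "A \<subseteq> C" and zero_A[simp]: "Z \<in> A" and one_A[simp]: "U \<in> A"
  using presburger_axioms(1-3) .
lemma A_carrier: "x \<in> A \<Longrightarrow> x \<in> C" using A_subset by blast
lemma plus_A[simp]: "x \<in> A \<Longrightarrow> y \<in> A \<Longrightarrow> x \<oplus> y \<in> A"
  using presburger_axioms(4) by blast
lemma A_pred: "x \<in> A \<Longrightarrow> x \<noteq> Z \<Longrightarrow> \<exists>z\<in>A. x = z \<oplus> U"
  using presburger_axioms(6) by blast
lemma le_A_iff: "x \<in> A \<Longrightarrow> y \<in> A \<Longrightarrow> x \<preceq> y \<longleftrightarrow> (\<exists>z\<in>A. x \<oplus> z = y)"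
  using presburger_axioms(11) by blast
lemma A_division: "0 < n \<Longrightarrow> x \<in> A \<Longrightarrow> \<exists>y\<in>A. nsm M n y \<preceq> x \<and> x \<prec> nsm M n (y \<oplus> U)"
  using presburger_axioms(12) by blast

lemma e_carrier[simp]: "x \<in> C \<Longrightarrow> y \<in> A \<Longrightarrow> e x y \<in> C"
  using exp_axioms(1) by blast
lemma e_zero[simp]: "x \<in> C \<Longrightarrow> e x Z = U"
  using exp_axioms(2) zero_A by blast
lemma e_one[simp]: "x \<in> C \<Longrightarrow> e x U = x"
  using exp_axioms(4) by blast
lemma e_add: "x \<in> C \<Longrightarrow> y \<in> A \<Longrightarrow> z \<in> A \<Longrightarrow> e x (y \<oplus> z) = e x y \<otimes> e x z"
  using exp_axioms(5) by blast
lemma e_nonzero: "x \<in> C \<Longrightarrow> y \<in> A \<Longrightarrow> x \<noteq> Z \<Longrightarrow> e x y \<noteq> Z"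
  using exp_axioms(3) by blast

lemma num_A[simp]: "num M n \<in> A" by (induct n) (auto simp: num_Suc)
lemma e_num: "x \<in> C \<Longrightarrow> e x (num M n) = npow M x n"
  by (induct n) (auto simp: num_Suc e_add)
lemma nsm_A[simp]: "y \<in> A \<Longrightarrow> nsm M n y \<in> A" by (induct n) (auto simp: nsm_Suc A_carrier)
lemma e_nsm: "x \<in> C \<Longrightarrow> y \<in> A \<Longrightarrow> e x (nsm M n y) = npow M (e x y) n"
  by (induct n) (auto simp: e_add A_carrier nsm_Suc)
lemma e_ge1: "x \<in> C \<Longrightarrow> y \<in> A \<Longrightarrow> x \<noteq> Z \<Longrightarrow> U \<preceq> e x y"
  using e_nonzero[of x y] pos_ge1[of "e x y"] pos_iff[of "e x y"] by simp

lemma catalan_e_standard: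
  assumes cat: "catalan_in M" and C: "x \<in> C" "y \<in> C" and gt: "U \<prec> x" "U \<prec> y" "U \<prec> num M ja" "U \<prec> num M jb"
    and eq: "e x (num M ja) = e y (num M jb) \<oplus> U"
  shows "x = num M 3 \<and> num M ja = num M 2 \<and> y = num M 2 \<and> num M jb = num M 3"
proof -
  have px: "pow_in M x (num M ja) (npow M x ja)" using pow_in_npow[of x ja] C gt lt_imp_le by blast
  have py: "pow_in M y (num M jb) (npow M y jb)" using pow_in_npow[of y jb] C gt lt_imp_le by blast
  have "npow M x ja = npow M y jb \<oplus> U" using eq e_num C by simp
  then show ?thesis using cat px py C gt unfolding catalan_in_def by (meson npow_carrier num_carrier)
qed

lemma numeral_if_e_bounded:
  assumes a: "a \<in> A" and x: "x \<in> C" "num M 2 \<preceq> x" and lt: "e x a \<prec> num M T"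
  shows "\<exists>j. a = num M j"
proof (cases "a \<prec> num M T")
  case True then show ?thesis using below_num A_carrier a by blast
next
  case False
  then have "num M T \<preceq> a" using not_lt A_carrier a by simp
  then obtain z where z: "z \<in> A" "num M T \<oplus> z = a" using le_A_iff[of "num M T" a] a by auto
  have x0: "x \<noteq> Z" using x Z_lt_U num_lt[of 0 2] lt_le_trans[of Z "num M 2" x] by auto
  have "e x a = npow M x T \<otimes> e x z" using z e_add[of x "num M T" z] e_num x by simp
  moreover have "npow M x T \<preceq> npow M x T \<otimes> e x z"
    using mul_le_mono_l[of U "e x z" "npow M x T"] e_ge1[of x z] x0 x z A_carrier by simp
  moreover have "npow M (num M 2) T \<preceq> npow M x T" using npow_mono_base[of "num M 2" x T] x by simp
  moreover have "num M T \<preceq> num M (2 ^ T)" using num_le by simp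
  ultimately have "num M T \<preceq> e x a" using num_npow[of 2 T] x z A_carrier
    le_trans[of "num M T" "num M (2 ^ T)" "npow M x T"] le_trans[of "num M T" "npow M x T" "e x a"] by simp
  then show ?thesis using lt not_le[of "num M T" "e x a"] x a by simp
qed

lemma div12_A:
  assumes a: "a \<in> A"
  shows "\<exists>q\<in>A. \<exists>j<12. a = nsm M 12 q \<oplus> num M j"
proof -
  obtain q where q: "q \<in> A" "nsm M 12 q \<preceq> a" "a \<prec> nsm M 12 (q \<oplus> U)" using A_division[of 12 a] a by auto
  obtain z where z: "z \<in> A" "nsm M 12 q \<oplus> z = a" using le_A_iff[of "nsm M 12 q" a] q a by auto
  have qC: "q \<in> C" "z \<in> C" using q z A_carrier by auto
  have "nsm M 12 (q \<oplus> U) = nsm M 12 q \<oplus> num M 12" using nsm_num[of q] nsm_num[of "q \<oplus> U"] qC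
    distrib_left[of "num M 12" q U] by simp
  then have "z \<prec> num M 12" using q z qC add_lt_mono_iff2[of z "num M 12" "nsm M 12 q"] by simp
  then obtain j where "j < 12" "z = num M j" using below_num qC by blast
  then show ?thesis using q z by blast
qed

lemma pow12_bound:
  assumes x: "x \<in> C" "U \<prec> x" and q: "q \<in> A" and aa: "U \<prec> nsm M 12 q \<oplus> num M ja"
  shows "npow M (e x q \<otimes> x) 12 \<preceq> npow M (npow M (e x q) 12 \<otimes> npow M x ja) (if q = Z then 6 else 2)"
proof -
  let ?X = "e x q"
  let ?w = "npow M ?X 12 \<otimes> npow M x ja"
  have xC: "x \<noteq> Z" using x Z_lt_U lt_asym[of x U] x lt_1_iff by auto
  have X1: "U \<preceq> ?X" using e_ge1[of x q] x xC q by simp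
  have x1: "U \<preceq> x" using x lt_imp_le by blast
  have XC: "?X \<in> C" using x q by simp
  show ?thesis
  proof (cases "q = Z")
    case True
    then have a: "U \<prec> num M ja" using aa nsm_num[of Z] by simp
    then have "2 \<le> ja" using num_lt[of 1 ja] by simp
    then have "npow M x 2 \<preceq> npow M x ja" using npow_mono[of x 2 ja] x1 x by simp
    moreover have "?w = npow M x ja" using True x by simp
    moreover have "npow M (npow M x 2) 6 = npow M x 12" using npow_mult[of x 2 6] x by simp
    ultimately have "npow M x 12 \<preceq> npow M ?w 6" using npow_mono_base[of "npow M x 2" "npow M x ja" 6] x by simp
    then show ?thesis using True x by simp
  next
    case False
    then obtain q0 where q0: "q0 \<in> A" "q = q0 \<oplus> U" using A_pred q by blast
    have "?X = e x q0 \<otimes> x" using q0 e_add[of x q0 U] x by simp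
    moreover have "U \<preceq> e x q0" using e_ge1[of x q0] x xC q0 by simp
    ultimately have "x \<preceq> ?X" using mul_le_mono_r[of U "e x q0" x] x q0 A_carrier by simp
    then have "?X \<otimes> x \<preceq> ?X \<otimes> ?X" using mul_le_mono_l[of x ?X ?X] x XC by simp
    then have "npow M (?X \<otimes> x) 12 \<preceq> npow M (?X \<otimes> ?X) 12" using npow_mono_base x XC by simp
    moreover have "npow M (?X \<otimes> ?X) 12 = npow M (npow M ?X 12) 2" using npow_mul_base[of ?X ?X 12] npow_2[of "npow M ?X 12"] XC by simp
    moreover have "npow M ?X 12 \<preceq> ?w" using le_mul[of "npow M ?X 12" "npow M x ja"] npow_ge1[of x ja] x1 x XC
      Z_lt_U lt_le_trans[of Z U "npow M x ja"] by simp
    then have "npow M (npow M ?X 12) 2 \<preceq> npow M ?w 2" using npow_mono_base x XC by simp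
    ultimately have "npow M (?X \<otimes> x) 12 \<preceq> npow M ?w 2"
      using le_trans[of "npow M (?X \<otimes> x) 12" "npow M (npow M ?X 12) 2" "npow M ?w 2"] x XC by simp
    then show ?thesis using False by simp
  qed
qed

lemma e_bounded_by_abc:
  assumes abc: "abc_in M K" and x: "x \<in> C" "U \<prec> x" and y: "y \<in> C" "U \<prec> y" and q: "q \<in> A" "q' \<in> A"
    and aa: "U \<prec> nsm M 12 q \<oplus> num M ja" and bb: "U \<prec> nsm M 12 q' \<oplus> num M jb"
    and eq: "e x (nsm M 12 q \<oplus> num M ja) = e y (nsm M 12 q' \<oplus> num M jb) \<oplus> U"
    and nz: "\<not> (q = Z \<and> q' = Z)"
  shows "e x (nsm M 12 q \<oplus> num M ja) \<prec> num M (K ^ 9)"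
proof -
  define X where "X = e x q"
  define Y where "Y = e y q'"
  define u where "u = e x (nsm M 12 q \<oplus> num M ja)"
  define v where "v = e y (nsm M 12 q' \<oplus> num M jb)"
  define D where "D = (X \<otimes> x) \<otimes> (Y \<otimes> y)"
  have XC: "X \<in> C" "Y \<in> C" unfolding X_def Y_def using x y q by auto
  have uC: "u \<in> C" "v \<in> C" unfolding u_def v_def using x y q by auto
  have DC: "D \<in> C" unfolding D_def using XC x y by simp
  have hu: "u = npow M X 12 \<otimes> npow M x ja" unfolding u_def X_def using e_add e_nsm e_num x q by simp
  have hv: "v = npow M Y 12 \<otimes> npow M y jb" unfolding v_def Y_def using e_add e_nsm e_num y q by simp
  have uv: "u = v \<oplus> U" using eq unfolding u_def v_def .
  have x0: "x \<noteq> Z" "y \<noteq> Z" using x y lt_1_iff[of x] lt_1_iff[of y] lt_asym[of x U] lt_asym[of y U] by auto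
  have v0: "v \<noteq> Z" unfolding v_def using e_nonzero x0 y q by simp
  have "X \<noteq> Z" "Y \<noteq> Z" unfolding X_def Y_def using e_nonzero x y q x0 by auto
  then have D0: "D \<noteq> Z" unfolding D_def using mul_eq_0 XC x y x0 by simp
  have "(v \<otimes> U) \<otimes> (v \<oplus> U) = (npow M Y 12 \<otimes> npow M y jb \<otimes> U) \<otimes> (npow M X 12 \<otimes> npow M x ja)"
    by (simp only: hu[symmetric] hv[symmetric] uv[symmetric])
  then have "\<forall>p\<in>C. prime_in M p \<and> dvd_in M p ((v \<otimes> U) \<otimes> (v \<oplus> U)) \<longrightarrow> dvd_in M p D"
    using prime_dvd_power_products[OF XC(1) x(1) XC(2) y(1), of _ 12 jb 12 ja] unfolding D_def by simp
  then have h: "npow M u 9 \<prec> npow M (num M K) 9 \<otimes> npow M D 12"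
    using abc_consecutive[OF abc uC(2) v0 DC D0] uv by blast
  have vu: "v \<preceq> u" using uv le_add uC by simp
  define e1 where "e1 = (if q = Z then 6 else (2::nat))"
  define e2 where "e2 = (if q' = Z then 6 else (2::nat))"
  have "npow M (X \<otimes> x) 12 \<preceq> npow M u e1"
    using pow12_bound[OF x q(1) aa] hu unfolding X_def e1_def by simp
  moreover have "npow M (Y \<otimes> y) 12 \<preceq> npow M v e2"
    using pow12_bound[OF y q(2) bb] hv unfolding Y_def e2_def by simp
  then have "npow M (Y \<otimes> y) 12 \<preceq> npow M u e2"
    using npow_mono_base[OF _ _ vu, of e2] le_trans[of "npow M (Y \<otimes> y) 12" "npow M v e2" "npow M u e2"] uC XC y
    by simp
  ultimately have "npow M (X \<otimes> x) 12 \<otimes> npow M (Y \<otimes> y) 12 \<preceq> npow M u e1 \<otimes> npow M u e2"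
    using mul_le_mono[of "npow M (X \<otimes> x) 12" "npow M u e1" "npow M (Y \<otimes> y) 12" "npow M u e2"] XC x y uC by simp
  then have "npow M D 12 \<preceq> npow M u (e1 + e2)"
    unfolding D_def using npow_mul_base[of "X \<otimes> x" "Y \<otimes> y" 12] npow_add[of u e1 e2] XC x y uC by simp
  moreover have "U \<preceq> u" using uv le_add2 uC by simp
  then have "npow M u (e1 + e2) \<preceq> npow M u 8"
    using npow_mono[of u "e1 + e2" 8] uC nz unfolding e1_def e2_def by simp
  ultimately have "npow M D 12 \<preceq> npow M u 8"
    using le_trans[of "npow M D 12" "npow M u (e1 + e2)" "npow M u 8"] uC DC by simp
  moreover have "Z \<prec> u" using le_lt_trans[of Z v u] lt_succ[of v] uv uC by simp
  ultimately have "u \<prec> npow M (num M K) 9"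
    using lt_of_npow_Suc_lt[of u "npow M (num M K) 9" "npow M D 12" 8] h uC DC by simp
  then show ?thesis unfolding u_def using num_npow by simp
qed

lemma catalan_e:
  assumes abcK: "abc_in M K" and cat: "catalan_in M"
    and xy: "x \<in> C" "y \<in> C" and ab: "a \<in> A" "b \<in> A"
    and gt: "U \<prec> x" "U \<prec> y" "U \<prec> a" "U \<prec> b"
    and eq: "e x a = e y b \<oplus> U"
  shows "x = num M 3 \<and> a = num M 2 \<and> y = num M 2 \<and> b = num M 3"
proof -
  have std: ?thesis if "a = num M ja" "b = num M jb" for ja jb
    using catalan_e_standard[OF cat xy, of ja jb] that gt eq by simp
  obtain q ja where q: "q \<in> A" "ja < 12" "a = nsm M 12 q \<oplus> num M ja" using div12_A ab by blast
  obtain q' jb where q': "q' \<in> A" "jb < 12" "b = nsm M 12 q' \<oplus> num M jb" using div12_A ab by blast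
  have nZ: "nsm M 12 Z = Z" using nsm_num[of Z] by simp
  show ?thesis
  proof (cases "q = Z \<and> q' = Z")
    case True
    then show ?thesis using std[of ja jb] q q' nZ by simp
  next
    case False
    have "e x (nsm M 12 q \<oplus> num M ja) \<prec> num M (K ^ 9)"
      using e_bounded_by_abc[OF abcK xy(1) gt(1) xy(2) gt(2) q(1) q'(1), of ja jb] q q' gt eq False by simp
    then have ua: "e x a \<prec> num M (K ^ 9)" using q by simp
    have two: "num M 2 = U \<oplus> U" using num_Suc[of 1] by (simp add: numeral_2_eq_2)
    have x2: "num M 2 \<preceq> x" using gt lt_succ_le[of U x] xy two by simp
    have y2: "num M 2 \<preceq> y" using gt lt_succ_le[of U y] xy two by simp
    obtain j1 where j1: "a = num M j1" using numeral_if_e_bounded[OF ab(1) xy(1) x2 ua] by blast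
    have "e y b \<prec> e x a" using eq lt_succ[of "e y b"] xy ab by simp
    then have "e y b \<prec> num M (K ^ 9)" using ua lt_trans[of "e y b" "e x a" "num M (K ^ 9)"] xy ab by simp
    then obtain j2 where j2: "b = num M j2" using numeral_if_e_bounded[OF ab(2) xy(2) y2] by blast
    show ?thesis using std[OF j1 j2] .
  qed
qed

end

theorem proposition5p4:
  fixes S :: "fm set" and B :: "'b lstr" and A :: "'b set" and e :: "'b \<Rightarrow> 'b \<Rightarrow> 'b"
  assumes theory_S: "\<forall>p\<in>S. sentence p"
    and extends: "\<forall>M :: 'b lstr. models S M \<longrightarrow> model_ISigma1 M"
    and abc: "\<exists>K::nat. \<forall>M :: 'b lstr. models S M \<longrightarrow> abc_in M K"
    and catalan: "\<forall>M :: 'b lstr. models S M \<longrightarrow> catalan_in M"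
    and modelB: "models S B"
    and expB: "exp_prime B A e"
  shows "\<forall>x\<in>car B. \<forall>y\<in>car B. \<forall>a\<in>A. \<forall>b\<in>A.
           lt B (one B) x \<and> lt B (one B) y \<and> lt B (one B) a \<and> lt B (one B) b \<and>
           e x a = pl B (e y b) (one B) \<longrightarrow>
           x = num B 3 \<and> a = num B 2 \<and> y = num B 2 \<and> b = num B 3"
proof (intro ballI impI)
  fix x y a b
  assume xy: "x \<in> car B" "y \<in> car B" and ab: "a \<in> A" "b \<in> A"
    and h: "lt B (one B) x \<and> lt B (one B) y \<and> lt B (one B) a \<and> lt B (one B) b \<and> e x a = pl B (e y b) (one B)"
  have "exp_prime_model B A e"
    using extends modelB expB by (simp add: exp_prime_model_def isigma1_model_def exp_prime_model_axioms_def)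
  moreover obtain K where "abc_in B K" using abc modelB by blast
  moreover have "catalan_in B" using catalan modelB by blast
  ultimately show "x = num B 3 \<and> a = num B 2 \<and> y = num B 2 \<and> b = num B 3"
    using exp_prime_model.catalan_e[of B A e K x y a b] xy ab h by blast
qed

end
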